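(* Let $D$ be a division algebra and $\sigma\in\mathrm{Aut}(D)$. Let $D(t;\sigma)$ be the division ring of (left) fractions of the skew polynomial ring $D[t;\sigma]$, and let $S$ be the subring of $D(t;\sigma)$ generated by $D$, $t$ and $t^{-1}$. Then $S$ is automorphically normalizable over $D$ if and only if $\sigma$ is of finite inner order.
   Context: All rings are associative with unity. $D[t;\sigma]$ is the skew polynomial ring with $ta=\sigma(a)t$ for $a\in D$; it is an Ore domain, so it has a division ring of fractions. An automorphism $\sigma$ has finite inner order if $\sigma^k$ is an inner automorphism $r\mapsto crc^{-1}$ for some positive integer $k$ and $c\in D^\times$. For a ring $S\supseteq D$, $a\in S$ is automorphic over $D$ with respect to $\tau\in\mathrm{Aut}(D)$ if $ab=\tau(b)a$ for all $b\in D$. Commuting $a_1,\ldots,a_m\in S$ are (left) algebraically independent over $D$ if monomials in them are left linearly independent over $D$. $S$ is automorphically normalizable over $D$ if there exist $m\ge0$ and commuting $a_1,\ldots,a_m\in S$, automorphic over $D$ with respect to pairwise commuting automorphisms, left algebraically independent over $D$, such that $S$ is finitely generated as a left module over the subring $D[a_1,\ldots,a_m]$ generated by $D\cup\{a_1,\ldots,a_m\}$. *)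

theory Defs
  imports "HOL-Algebra.Algebra"
begin

definition division_ring :: "('a, 'b) ring_scheme \<Rightarrow> bool" where
  "division_ring K \<longleftrightarrow> ring K \<and> \<one>\<^bsub>K\<^esub> \<noteq> \<zero>\<^bsub>K\<^esub> \<and>
     (\<forall>x \<in> carrier K - {\<zero>\<^bsub>K\<^esub>}. x \<in> Units K)"

definition subdivring :: "'a set \<Rightarrow> ('a, 'b) ring_scheme \<Rightarrow> bool" where
  "subdivring D K \<longleftrightarrow> subring D K \<and> \<one>\<^bsub>K\<^esub> \<noteq> \<zero>\<^bsub>K\<^esub> \<and>
     (\<forall>x \<in> D - {\<zero>\<^bsub>K\<^esub>}. x \<in> Units K \<and> inv\<^bsub>K\<^esub> x \<in> D)"

definition ring_aut :: "('a, 'b) ring_scheme \<Rightarrow> 'a set \<Rightarrow> ('a \<Rightarrow> 'a) set" where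
  "ring_aut K D = ring_iso (K\<lparr>carrier := D\<rparr>) (K\<lparr>carrier := D\<rparr>)"

definition finite_inner_order :: "('a, 'b) ring_scheme \<Rightarrow> 'a set \<Rightarrow> ('a \<Rightarrow> 'a) \<Rightarrow> bool" where
  "finite_inner_order K D \<sigma> \<longleftrightarrow>
     (\<exists>k::nat. k > 0 \<and> (\<exists>c \<in> Units (K\<lparr>carrier := D\<rparr>).
        (\<forall>r \<in> D. (\<sigma> ^^ k) r = c \<otimes>\<^bsub>K\<^esub> r \<otimes>\<^bsub>K\<^esub> inv\<^bsub>K\<lparr>carrier := D\<rparr>\<^esub> c)))"

definition exps :: "nat \<Rightarrow> (nat \<Rightarrow> nat) set" where
  "exps m = {\<alpha>. \<forall>i\<ge>m. \<alpha> i = 0}"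

fun monomial :: "('a, 'b) ring_scheme \<Rightarrow> (nat \<Rightarrow> 'a) \<Rightarrow> (nat \<Rightarrow> nat) \<Rightarrow> nat \<Rightarrow> 'a" where
  "monomial K a \<alpha> 0 = \<one>\<^bsub>K\<^esub>"
| "monomial K a \<alpha> (Suc n) = monomial K a \<alpha> n \<otimes>\<^bsub>K\<^esub> (a n [^]\<^bsub>K\<^esub> \<alpha> n)"

definition left_alg_indep :: "('a, 'b) ring_scheme \<Rightarrow> 'a set \<Rightarrow> nat \<Rightarrow> (nat \<Rightarrow> 'a) \<Rightarrow> bool" where
  "left_alg_indep K D m a \<longleftrightarrow>
     (\<forall>F c. finite F \<longrightarrow> F \<subseteq> exps m \<longrightarrow> c ` F \<subseteq> D \<longrightarrow>
        finsum K (\<lambda>\<alpha>. c \<alpha> \<otimes>\<^bsub>K\<^esub> monomial K a \<alpha> m) F = \<zero>\<^bsub>K\<^esub> \<longrightarrow>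
        (\<forall>\<alpha> \<in> F. c \<alpha> = \<zero>\<^bsub>K\<^esub>))"

definition automorphic :: "('a, 'b) ring_scheme \<Rightarrow> 'a set \<Rightarrow> ('a \<Rightarrow> 'a) \<Rightarrow> 'a \<Rightarrow> bool" where
  "automorphic K D \<tau> a \<longleftrightarrow> (\<forall>b \<in> D. a \<otimes>\<^bsub>K\<^esub> b = \<tau> b \<otimes>\<^bsub>K\<^esub> a)"

definition fin_gen_left_module :: "('a, 'b) ring_scheme \<Rightarrow> 'a set \<Rightarrow> 'a set \<Rightarrow> bool" where
  "fin_gen_left_module K B S \<longleftrightarrow>
     (\<exists>G. finite G \<and> G \<subseteq> S \<and>
        S = {finsum K (\<lambda>g. c g \<otimes>\<^bsub>K\<^esub> g) G | c. c ` G \<subseteq> B})"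

definition automorphically_normalizable :: "('a, 'b) ring_scheme \<Rightarrow> 'a set \<Rightarrow> 'a set \<Rightarrow> bool" where
  "automorphically_normalizable K D S \<longleftrightarrow>
     (\<exists>(m::nat) (a::nat \<Rightarrow> 'a) (\<tau>::nat \<Rightarrow> 'a \<Rightarrow> 'a).
        (\<forall>i<m. a i \<in> S) \<and>
        (\<forall>i<m. \<forall>j<m. a i \<otimes>\<^bsub>K\<^esub> a j = a j \<otimes>\<^bsub>K\<^esub> a i) \<and>
        (\<forall>i<m. \<tau> i \<in> ring_aut K D \<and> automorphic K D (\<tau> i) (a i)) \<and>
        (\<forall>i<m. \<forall>j<m. \<forall>x \<in> D. \<tau> i (\<tau> j x) = \<tau> j (\<tau> i x)) \<and>
        left_alg_indep K D m a \<and>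
        fin_gen_left_module K (generate_ring K (D \<union> a ` {..<m})) S)"

text \<open>K is a division ring of (left) fractions of the skew polynomial ring D[t;sigma]:
  K is a division ring containing D as division subring and an element t with
  t a = sigma(a) t for a in D, whose powers are left linearly independent over D
  (so the subring generated by D and t is D[t;sigma]), and every element of K
  is a left fraction u^(-1) v with u, v in D[t;sigma], u nonzero.\<close>
definition skew_fraction_field ::
  "('a, 'b) ring_scheme \<Rightarrow> 'a set \<Rightarrow> ('a \<Rightarrow> 'a) \<Rightarrow> 'a \<Rightarrow> bool" where
  "skew_fraction_field K D \<sigma> t \<longleftrightarrow>
     division_ring K \<and> subdivring D K \<and> \<sigma> \<in> ring_aut K D \<and>
     t \<in> carrier K \<and>
     (\<forall>a \<in> D. t \<otimes>\<^bsub>K\<^esub> a = \<sigma> a \<otimes>\<^bsub>K\<^esub> t) \<and>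
     (\<forall>F c. finite F \<longrightarrow> c ` F \<subseteq> D \<longrightarrow>
        finsum K (\<lambda>n. c n \<otimes>\<^bsub>K\<^esub> (t [^]\<^bsub>K\<^esub> (n::nat))) F = \<zero>\<^bsub>K\<^esub> \<longrightarrow>
        (\<forall>n \<in> F. c n = \<zero>\<^bsub>K\<^esub>)) \<and>
     (\<forall>x \<in> carrier K. \<exists>u \<in> generate_ring K (D \<union> {t}). \<exists>v \<in> generate_ring K (D \<union> {t}).
        u \<noteq> \<zero>\<^bsub>K\<^esub> \<and> x = inv\<^bsub>K\<^esub> u \<otimes>\<^bsub>K\<^esub> v)"

end

theory Submission
  imports Defs
begin

text \<open>
  If \<sigma>^k is conjugation by c, then w = c\<inverse> t^k commutes with D, and so does z = w + w\<inverse>.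
  The leading term of z^n w^n is a nonzero multiple of t^(2kn), hence z is transcendental over D,
  and since t^(2k) and t\<inverse> are D[z]-combinations of 1, t, ..., t^(2k-1), these powers generate S
  over D[z].

  Conversely, if no power of \<sigma> is inner, comparing coefficients shows that every element of S
  automorphic over D is a monomial e t^n or e t^-n. If all the a_i are monomials in t (or all in
  t\<inverse>), then D[a_1, ..., a_m] lies in D[t;\<sigma>] (or D[t\<inverse>;\<sigma>\<inverse>]), over which S is not
  finitely generated: t^-N with N large is out of reach. Otherwise some a_j = e t^p and
  a_l = e' t^-q with p, q > 0, and then a_j^q a_l^p lies in D, contradicting algebraic independence.
\<close>

definition left_span :: "('a, 'b) ring_scheme \<Rightarrow> 'a set \<Rightarrow> 'a set \<Rightarrow> 'a set" where
  "left_span R B G = {finsum R (\<lambda>g. c g \<otimes>\<^bsub>R\<^esub> g) G | c. c ` G \<subseteq> B}"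

lemma fin_gen_left_module_iff_left_span:
  "fin_gen_left_module R B S \<longleftrightarrow> (\<exists>G. finite G \<and> G \<subseteq> S \<and> S = left_span R B G)"
  unfolding fin_gen_left_module_def left_span_def ..

context ring
begin

lemma left_spanE:
  assumes "v \<in> left_span R B G"
  obtains c where "c ` G \<subseteq> B" "v = (\<Oplus>g\<in>G. c g \<otimes> g)"
  using assms unfolding left_span_def by blast

lemma left_spanI: "c ` G \<subseteq> B \<Longrightarrow> v = (\<Oplus>g\<in>G. c g \<otimes> g) \<Longrightarrow> v \<in> left_span R B G"
  unfolding left_span_def by blast

lemma finsum_subring_closed:
  assumes S: "subring S R" and A: "finite A" "f ` A \<subseteq> S"
  shows "finsum R f A \<in> S"
  using A
proof (induct A rule: finite_induct)
  case empty then show ?case using subringE(2)[OF S] by simp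
next
  case (insert a A)
  then have "finsum R f (insert a A) = f a \<oplus> finsum R f A"
    using subringE(1)[OF S] by (intro finsum_insert) auto
  then show ?case using insert subringE(7)[OF S] by simp
qed

lemma left_span_subset_subring:
  assumes "subring S R" "B \<subseteq> S" "G \<subseteq> S" "finite G"
  shows "left_span R B G \<subseteq> S"
proof
  fix v assume "v \<in> left_span R B G"
  then obtain c where c: "c ` G \<subseteq> B" and v: "v = (\<Oplus>g\<in>G. c g \<otimes> g)" by (rule left_spanE)
  have "(\<Oplus>g\<in>G. c g \<otimes> g) \<in> S"
    using c assms by (intro finsum_subring_closed) (auto intro: subringE(6))
  then show "v \<in> S" using v by simp
qed

context
  fixes B G
  assumes B: "subring B R" and G: "finite G" "G \<subseteq> carrier R"
begin

lemma left_span_coeff_carrier: "c ` G \<subseteq> B \<Longrightarrow> g \<in> G \<Longrightarrow> c g \<in> carrier R"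
  using subringE(1)[OF B] by auto

lemma left_span_carrier: "v \<in> left_span R B G \<Longrightarrow> v \<in> carrier R"
  using G left_span_coeff_carrier by (auto elim!: left_spanE intro!: finsum_closed)

lemma left_span_zero: "\<zero> \<in> left_span R B G"
proof (rule left_spanI)
  show "(\<lambda>_. \<zero>) ` G \<subseteq> B" using subringE(2)[OF B] by auto
  have "(\<Oplus>g\<in>G. \<zero> \<otimes> g) = (\<Oplus>g\<in>G. \<zero>)" by (rule finsum_cong') (use G in auto)
  then show "\<zero> = (\<Oplus>g\<in>G. \<zero> \<otimes> g)" by simp
qed

lemma left_span_single:
  assumes b: "b \<in> B" and g: "g \<in> G"
  shows "b \<otimes> g \<in> left_span R B G"
proof (rule left_spanI)
  show "(\<lambda>h. if h = g then b else \<zero>) ` G \<subseteq> B" using b subringE(2)[OF B] by auto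
  have bC: "b \<in> carrier R" using b subringE(1)[OF B] by auto
  have "(\<Oplus>h\<in>G. (if h = g then b else \<zero>) \<otimes> h) = (\<Oplus>h\<in>G. if g = h then b \<otimes> h else \<zero>)"
    by (rule finsum_cong') (use G bC in auto)
  also have "\<dots> = b \<otimes> g"
    by (rule add.finprod_singleton[OF g G(1)]) (use G bC in auto)
  finally show "b \<otimes> g = (\<Oplus>h\<in>G. (if h = g then b else \<zero>) \<otimes> h)" ..
qed

lemma left_span_add:
  assumes "v \<in> left_span R B G" "v' \<in> left_span R B G"
  shows "v \<oplus> v' \<in> left_span R B G"
proof -
  obtain c where c: "c ` G \<subseteq> B" "v = (\<Oplus>g\<in>G. c g \<otimes> g)" using assms(1) by (rule left_spanE)
  obtain c' where c': "c' ` G \<subseteq> B" "v' = (\<Oplus>g\<in>G. c' g \<otimes> g)" using assms(2) by (rule left_spanE)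
  note cC = left_span_coeff_carrier[OF c(1)] left_span_coeff_carrier[OF c'(1)]
  have "v \<oplus> v' = (\<Oplus>g\<in>G. c g \<otimes> g \<oplus> c' g \<otimes> g)"
    unfolding c c' by (rule finsum_addf[symmetric]) (use cC G in auto)
  also have "\<dots> = (\<Oplus>g\<in>G. (c g \<oplus> c' g) \<otimes> g)"
    by (rule finsum_cong') (use cC G in \<open>auto simp: l_distr\<close>)
  finally show ?thesis by (rule left_spanI[rotated]) (use c c' subringE(7)[OF B] in auto)
qed

lemma left_span_lmult:
  assumes b: "b \<in> B" and v: "v \<in> left_span R B G"
  shows "b \<otimes> v \<in> left_span R B G"
proof -
  obtain c where c: "c ` G \<subseteq> B" "v = (\<Oplus>g\<in>G. c g \<otimes> g)" using v by (rule left_spanE)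
  note cC = left_span_coeff_carrier[OF c(1)]
  have bC: "b \<in> carrier R" using b subringE(1)[OF B] by auto
  have "b \<otimes> v = (\<Oplus>g\<in>G. b \<otimes> (c g \<otimes> g))"
    unfolding c by (rule finsum_rdistr) (use cC G bC in auto)
  also have "\<dots> = (\<Oplus>g\<in>G. (b \<otimes> c g) \<otimes> g)"
    by (rule finsum_cong') (use cC G bC in \<open>auto simp: m_assoc\<close>)
  finally show ?thesis by (rule left_spanI[rotated]) (use c b subringE(6)[OF B] in auto)
qed

lemma left_span_finsum:
  "finite A \<Longrightarrow> (\<And>a. a \<in> A \<Longrightarrow> f a \<in> left_span R B G) \<Longrightarrow> finsum R f A \<in> left_span R B G"
proof (induct A rule: finite_induct)
  case empty then show ?case using left_span_zero by simp
next
  case (insert a A)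
  then have "finsum R f (insert a A) = f a \<oplus> finsum R f A"
    by (intro finsum_insert) (auto intro: left_span_carrier)
  then show ?case using insert left_span_add by auto
qed

lemma left_span_rmult:
  assumes h: "h \<in> carrier R" and gen: "\<And>b g. b \<in> B \<Longrightarrow> g \<in> G \<Longrightarrow> b \<otimes> g \<otimes> h \<in> left_span R B G"
    and v: "v \<in> left_span R B G"
  shows "v \<otimes> h \<in> left_span R B G"
proof -
  obtain c where c: "c ` G \<subseteq> B" "v = (\<Oplus>g\<in>G. c g \<otimes> g)" using v by (rule left_spanE)
  note cC = left_span_coeff_carrier[OF c(1)]
  have "v \<otimes> h = (\<Oplus>g\<in>G. c g \<otimes> g \<otimes> h)"
    unfolding c by (rule finsum_ldistr) (use cC G h in auto)
  also have "\<dots> \<in> left_span R B G"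
    by (rule left_span_finsum[OF G(1)]) (use gen c(1) in auto)
  finally show ?thesis .
qed

lemma generate_ring_subset_left_span:
  assumes H: "H \<subseteq> carrier R" and one: "\<one> \<in> left_span R B G"
    and gen: "\<And>h b g. h \<in> H \<Longrightarrow> b \<in> B \<Longrightarrow> g \<in> G \<Longrightarrow> b \<otimes> g \<otimes> h \<in> left_span R B G"
  shows "generate_ring R H \<subseteq> left_span R B G"
proof
  fix x assume x: "x \<in> generate_ring R H"
  have "\<forall>v \<in> left_span R B G. v \<otimes> x \<in> left_span R B G"
    using x
  proof (induct rule: generate_ring.induct)
    case one then show ?case using left_span_carrier by simp
  next
    case (incl h) then show ?case using H gen left_span_rmult by auto
  next
    case (a_inv h)
    have hC: "h \<in> carrier R" using a_inv(1) generate_ring_in_carrier[OF H] by simp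
    have "v \<otimes> \<ominus> h = \<ominus> \<one> \<otimes> (v \<otimes> h)" if "v \<in> left_span R B G" for v
      using that hC left_span_carrier by (simp add: r_minus l_minus)
    then show ?case using a_inv(2) left_span_lmult subringE(3,5)[OF B] by auto
  next
    case (eng_add h1 h2)
    have "h1 \<in> carrier R" "h2 \<in> carrier R" using eng_add generate_ring_in_carrier[OF H] by auto
    then show ?case using eng_add left_span_add left_span_carrier by (simp add: r_distr)
  next
    case (eng_mult h1 h2)
    have "h1 \<in> carrier R" "h2 \<in> carrier R" using eng_mult generate_ring_in_carrier[OF H] by auto
    then show ?case using eng_mult left_span_carrier by (simp add: m_assoc[symmetric])
  qed
  then show "x \<in> left_span R B G"
    using one x generate_ring_in_carrier[OF H] by force
qed

lemma fin_gen_left_module_generate_ringI: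
  assumes H: "H \<subseteq> carrier R" and BX: "B \<subseteq> generate_ring R H" and GX: "G \<subseteq> generate_ring R H"
    and one: "\<one> \<in> left_span R B G"
    and gen: "\<And>h b g. h \<in> H \<Longrightarrow> b \<in> B \<Longrightarrow> g \<in> G \<Longrightarrow> b \<otimes> g \<otimes> h \<in> left_span R B G"
  shows "fin_gen_left_module R B (generate_ring R H)"
  unfolding fin_gen_left_module_iff_left_span
proof (intro exI conjI)
  show "generate_ring R H = left_span R B G"
    using generate_ring_subset_left_span[OF H one gen]
      left_span_subset_subring[OF generate_ring_is_subring[OF H] BX GX G(1)] by blast
qed (use G GX in auto)

end

end

context ring
begin

lemma monomial_zero_exps: "monomial R a (\<lambda>_. 0) n = \<one>"
  by (induct n) simp_all

lemma monomial_two_vars: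
  assumes ij: "i < j" and a: "a i \<in> carrier R" "a j \<in> carrier R"
    and \<alpha>: "\<And>l. l \<noteq> i \<Longrightarrow> l \<noteq> j \<Longrightarrow> \<alpha> l = 0"
  shows "monomial R a \<alpha> n =
    (if i < n then a i [^] \<alpha> i else \<one>) \<otimes> (if j < n then a j [^] \<alpha> j else \<one>)"
proof (induct n)
  case (Suc n)
  consider "n = i" | "n = j" | "n \<noteq> i" "n \<noteq> j" by blast
  then show ?case
  proof cases
    case 3
    then show ?thesis using Suc ij a \<alpha>[OF 3] by (auto simp: less_Suc_eq)
  qed (use Suc ij a in \<open>auto simp: m_assoc\<close>)
qed simp

lemma left_alg_indep_monomial_notin:
  assumes indep: "left_alg_indep R D m a" and D: "subring D R" and one: "\<one> \<noteq> \<zero>"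
    and \<alpha>: "\<alpha> \<in> exps m" "\<alpha> \<noteq> (\<lambda>_. 0)"
  shows "monomial R a \<alpha> m \<notin> D"
proof
  assume y: "monomial R a \<alpha> m \<in> D"
  define y where "y = monomial R a \<alpha> m"
  have yC: "y \<in> carrier R" using y subringE(1)[OF D] y_def by auto
  define F where "F = {\<alpha>, (\<lambda>_. 0)}"
  define c where "c = (\<lambda>\<beta>. if \<beta> = \<alpha> then \<one> else \<ominus> y)"
  have F: "finite F" "F \<subseteq> exps m" using \<alpha> unfolding F_def exps_def by auto
  have cF: "c ` F \<subseteq> D" unfolding c_def F_def using subringE(3,5)[OF D] y y_def by auto
  have "finsum R (\<lambda>\<beta>. c \<beta> \<otimes> monomial R a \<beta> m) F
      = c \<alpha> \<otimes> monomial R a \<alpha> m \<oplus> finsum R (\<lambda>\<beta>. c \<beta> \<otimes> monomial R a \<beta> m) {(\<lambda>_. 0)}"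
    unfolding F_def by (rule finsum_insert) (use \<alpha> yC y_def monomial_zero_exps c_def in auto)
  also have "\<dots> = y \<oplus> \<ominus> y" using \<alpha> yC y_def monomial_zero_exps c_def by simp
  also have "\<dots> = \<zero>" using yC by (simp add: r_neg)
  finally have "\<forall>\<beta>\<in>F. c \<beta> = \<zero>" using indep F cF unfolding left_alg_indep_def by blast
  then show False using one unfolding F_def c_def by auto
qed

lemma left_alg_indep_pow_mult_pow_notin:
  assumes indep: "left_alg_indep R D m a" and D: "subring D R" and one: "\<one> \<noteq> \<zero>"
    and ij: "i < j" "j < m" and a: "a i \<in> carrier R" "a j \<in> carrier R" and p: "0 < p"
  shows "a i [^] (p::nat) \<otimes> a j [^] (q::nat) \<notin> D"
proof -
  define \<alpha> where "\<alpha> = (\<lambda>l. if l = i then p else if l = j then q else 0)"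
  have "\<alpha> \<in> exps m" "\<alpha> \<noteq> (\<lambda>_. 0)" using ij p unfolding \<alpha>_def exps_def by (auto dest: fun_cong[of _ _ i])
  moreover have "monomial R a \<alpha> m = a i [^] p \<otimes> a j [^] q"
    using monomial_two_vars[OF ij(1) a, of \<alpha> m] ij unfolding \<alpha>_def by auto
  ultimately show ?thesis using left_alg_indep_monomial_notin[OF indep D one] by metis
qed

lemma left_alg_indep_single_varI:
  assumes x: "x \<in> carrier R" and D: "D \<subseteq> carrier R"
    and indep: "\<And>F c. finite F \<Longrightarrow> c ` F \<subseteq> D \<Longrightarrow> (\<Oplus>n\<in>F. c n \<otimes> x [^] (n::nat)) = \<zero> \<Longrightarrow>
      \<forall>n\<in>F. c n = \<zero>"
  shows "left_alg_indep R D 1 (\<lambda>_. x)"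
  unfolding left_alg_indep_def
proof (intro allI impI)
  fix F :: "(nat \<Rightarrow> nat) set" and c
  assume F: "finite F" "F \<subseteq> exps 1" and cF: "c ` F \<subseteq> D"
    and sum: "finsum R (\<lambda>\<alpha>. c \<alpha> \<otimes> monomial R (\<lambda>_. x) \<alpha> 1) F = \<zero>"
  have inj: "inj_on (\<lambda>\<alpha>. \<alpha> 0) F"
  proof (rule inj_onI, rule ext)
    fix \<alpha> \<beta> l assume ab: "\<alpha> \<in> F" "\<beta> \<in> F" "\<alpha> 0 = \<beta> 0"
    show "\<alpha> l = \<beta> l"
    proof (cases "l = 0")
      case False
      then have "\<gamma> l = 0" if "\<gamma> \<in> F" for \<gamma> using that F(2) unfolding exps_def by auto
      then show ?thesis using ab(1,2) by metis
    qed (use ab in simp)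
  qed
  define c' where "c' = (\<lambda>n. c (inv_into F (\<lambda>\<alpha>. \<alpha> 0) n))"
  have c'F: "c' (\<alpha> 0) = c \<alpha>" if "\<alpha> \<in> F" for \<alpha> using inv_into_f_f[OF inj that] c'_def by simp
  have cC: "c \<alpha> \<in> carrier R" if "\<alpha> \<in> F" for \<alpha> using cF D that by auto
  have "(\<Oplus>n\<in>(\<lambda>\<alpha>. \<alpha> 0) ` F. c' n \<otimes> x [^] n) = (\<Oplus>\<alpha>\<in>F. c' (\<alpha> 0) \<otimes> x [^] \<alpha> 0)"
    by (rule finsum_reindex) (use inj c'F cC x in auto)
  also have "\<dots> = finsum R (\<lambda>\<alpha>. c \<alpha> \<otimes> monomial R (\<lambda>_. x) \<alpha> 1) F"
    by (rule finsum_cong') (use c'F cC x in auto)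
  finally have "\<forall>n\<in>(\<lambda>\<alpha>. \<alpha> 0) ` F. c' n = \<zero>"
    using sum F(1) cF c'F by (intro indep) auto
  then show "\<forall>\<alpha>\<in>F. c \<alpha> = \<zero>" using c'F by auto
qed

end

section \<open>The skew Laurent setting\<close>

lemma ring_aut_closed: "\<tau> \<in> ring_aut K D \<Longrightarrow> b \<in> D \<Longrightarrow> \<tau> b \<in> D"
  unfolding ring_aut_def ring_iso_def ring_hom_def by auto

locale skew_laurent = ring K for K (structure) +
  fixes D :: "'a set" and \<sigma> :: "'a \<Rightarrow> 'a" and t :: 'a
  assumes nonzero_Units: "\<And>x. x \<in> carrier K \<Longrightarrow> x \<noteq> \<zero> \<Longrightarrow> x \<in> Units K"
    and one_not_zero: "\<one> \<noteq> \<zero>"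
    and D_subring: "subring D K"
    and D_inv_closed: "\<And>x. x \<in> D \<Longrightarrow> x \<noteq> \<zero> \<Longrightarrow> inv x \<in> D"
    and sigma_aut: "\<sigma> \<in> ring_aut K D"
    and t_carrier: "t \<in> carrier K"
    and t_commute: "\<And>a. a \<in> D \<Longrightarrow> t \<otimes> a = \<sigma> a \<otimes> t"
    and t_pow_indep: "\<And>F c. finite F \<Longrightarrow> c ` F \<subseteq> D \<Longrightarrow>
        (\<Oplus>n\<in>F. c n \<otimes> t [^] (n::nat)) = \<zero> \<Longrightarrow> \<forall>n\<in>F. c n = \<zero>"
begin

lemma D_carrier: "a \<in> D \<Longrightarrow> a \<in> carrier K" using subringE(1)[OF D_subring] by auto
lemma D_zero: "\<zero> \<in> D" using subringE(2)[OF D_subring] .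
lemma D_one: "\<one> \<in> D" using subringE(3)[OF D_subring] .
lemma D_a_inv: "a \<in> D \<Longrightarrow> \<ominus> a \<in> D" using subringE(5)[OF D_subring] .
lemma D_mult: "a \<in> D \<Longrightarrow> b \<in> D \<Longrightarrow> a \<otimes> b \<in> D" using subringE(6)[OF D_subring] .
lemma D_add: "a \<in> D \<Longrightarrow> b \<in> D \<Longrightarrow> a \<oplus> b \<in> D" using subringE(7)[OF D_subring] .

lemma mult_nonzero:
  assumes "a \<in> carrier K" "b \<in> carrier K" "a \<noteq> \<zero>" "b \<noteq> \<zero>"
  shows "a \<otimes> b \<noteq> \<zero>"
proof
  assume ab: "a \<otimes> b = \<zero>"
  have "b = inv a \<otimes> (a \<otimes> b)" using assms nonzero_Units by (simp add: m_assoc[symmetric])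
  then show False using ab assms nonzero_Units by simp
qed

lemma inv_nonzero: "a \<in> carrier K \<Longrightarrow> a \<noteq> \<zero> \<Longrightarrow> inv a \<noteq> \<zero>"
  using nonzero_Units one_not_zero by (metis Units_l_inv l_null)

lemma sigma_hom: "\<sigma> \<in> ring_hom (K\<lparr>carrier := D\<rparr>) (K\<lparr>carrier := D\<rparr>)"
  using sigma_aut unfolding ring_aut_def ring_iso_def by auto
lemma sigma_bij: "bij_betw \<sigma> D D"
  using sigma_aut unfolding ring_aut_def ring_iso_def by auto
lemma sigma_D: "a \<in> D \<Longrightarrow> \<sigma> a \<in> D"
  using sigma_hom unfolding ring_hom_def by auto
lemma sigma_mult: "a \<in> D \<Longrightarrow> b \<in> D \<Longrightarrow> \<sigma> (a \<otimes> b) = \<sigma> a \<otimes> \<sigma> b"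
  using sigma_hom unfolding ring_hom_def by auto
lemma sigma_add: "a \<in> D \<Longrightarrow> b \<in> D \<Longrightarrow> \<sigma> (a \<oplus> b) = \<sigma> a \<oplus> \<sigma> b"
  using sigma_hom unfolding ring_hom_def by auto
lemma sigma_one: "\<sigma> \<one> = \<one>"
  using sigma_hom unfolding ring_hom_def by auto
lemma sigma_inj: "a \<in> D \<Longrightarrow> b \<in> D \<Longrightarrow> \<sigma> a = \<sigma> b \<Longrightarrow> a = b"
  using sigma_bij unfolding bij_betw_def inj_on_def by auto

lemma sigma_zero: "\<sigma> \<zero> = \<zero>"
proof -
  have "\<sigma> \<zero> \<oplus> \<sigma> \<zero> = \<sigma> \<zero> \<oplus> \<zero>"
    using sigma_add[OF D_zero D_zero] sigma_D[OF D_zero] D_carrier by simp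
  then show ?thesis using sigma_D[OF D_zero] D_carrier by (meson add.l_cancel zero_closed)
qed

lemma sigma_nonzero: "a \<in> D \<Longrightarrow> a \<noteq> \<zero> \<Longrightarrow> \<sigma> a \<noteq> \<zero>"
  using sigma_inj[OF _ D_zero] sigma_zero by auto

definition sigma_inv :: "'a \<Rightarrow> 'a" where "sigma_inv = inv_into D \<sigma>"

lemma sigma_inv_D: "a \<in> D \<Longrightarrow> sigma_inv a \<in> D"
  unfolding sigma_inv_def using sigma_bij by (metis bij_betw_def inv_into_into)
lemma sigma_sigma_inv: "a \<in> D \<Longrightarrow> \<sigma> (sigma_inv a) = a"
  unfolding sigma_inv_def using sigma_bij by (meson bij_betw_inv_into_right)
lemma sigma_inv_sigma: "a \<in> D \<Longrightarrow> sigma_inv (\<sigma> a) = a"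
  unfolding sigma_inv_def using sigma_bij by (meson bij_betw_inv_into_left)

lemma sigma_inv_aut: "sigma_inv \<in> ring_aut K D"
  unfolding ring_aut_def ring_iso_def ring_hom_def
proof (intro CollectI conjI)
  show "sigma_inv \<in> carrier (K\<lparr>carrier := D\<rparr>) \<rightarrow> carrier (K\<lparr>carrier := D\<rparr>)"
    using sigma_inv_D by auto
  show "\<forall>x y. x \<in> carrier (K\<lparr>carrier := D\<rparr>) \<and> y \<in> carrier (K\<lparr>carrier := D\<rparr>) \<longrightarrow>
        sigma_inv (x \<otimes>\<^bsub>K\<lparr>carrier := D\<rparr>\<^esub> y) = sigma_inv x \<otimes>\<^bsub>K\<lparr>carrier := D\<rparr>\<^esub> sigma_inv y \<and>
        sigma_inv (x \<oplus>\<^bsub>K\<lparr>carrier := D\<rparr>\<^esub> y) = sigma_inv x \<oplus>\<^bsub>K\<lparr>carrier := D\<rparr>\<^esub> sigma_inv y"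
    using sigma_inj sigma_inv_D sigma_sigma_inv sigma_mult sigma_add D_mult D_add by auto
  show "sigma_inv \<one>\<^bsub>K\<lparr>carrier := D\<rparr>\<^esub> = \<one>\<^bsub>K\<lparr>carrier := D\<rparr>\<^esub>"
    using sigma_inv_sigma[OF D_one] sigma_one by simp
  show "bij_betw sigma_inv (carrier (K\<lparr>carrier := D\<rparr>)) (carrier (K\<lparr>carrier := D\<rparr>))"
    unfolding sigma_inv_def using sigma_bij bij_betw_inv_into by auto
qed

lemma sigma_pow_D: "a \<in> D \<Longrightarrow> (\<sigma> ^^ n) a \<in> D"
  by (induct n) (auto simp: sigma_D)
lemma sigma_pow_nonzero: "a \<in> D \<Longrightarrow> a \<noteq> \<zero> \<Longrightarrow> (\<sigma> ^^ n) a \<noteq> \<zero>"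
  by (induct n) (auto simp: sigma_nonzero sigma_pow_D)
lemma sigma_inv_pow_D: "a \<in> D \<Longrightarrow> (sigma_inv ^^ n) a \<in> D"
  by (induct n) (auto simp: sigma_inv_D)

lemma sigma_pow_sigma_inv_pow: "a \<in> D \<Longrightarrow> (\<sigma> ^^ n) ((sigma_inv ^^ n) a) = a"
proof (induct n arbitrary: a)
  case (Suc n)
  have "(\<sigma> ^^ Suc n) ((sigma_inv ^^ Suc n) a) = (\<sigma> ^^ n) (\<sigma> (sigma_inv ((sigma_inv ^^ n) a)))"
    by (simp only: funpow_Suc_right[of n \<sigma>] funpow.simps(2)[of n sigma_inv] comp_apply)
  then show ?case using Suc by (simp add: sigma_sigma_inv sigma_inv_pow_D)
qed simp

lemma t_nonzero: "t \<noteq> \<zero>"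
proof
  assume "t = \<zero>"
  then have "(\<Oplus>n\<in>{1::nat}. (\<lambda>_. \<one>) n \<otimes> t [^] n) = \<zero>" by simp
  from t_pow_indep[OF _ _ this] D_one show False using one_not_zero by auto
qed

lemma t_Units: "t \<in> Units K" using nonzero_Units[OF t_carrier t_nonzero] .
lemma inv_t_carrier: "inv t \<in> carrier K" using t_Units by simp
lemma t_inv_t: "t \<otimes> inv t = \<one>" using t_Units by simp
lemma inv_t_t: "inv t \<otimes> t = \<one>" using t_Units by simp
lemma inv_inv_t: "inv (inv t) = t" using t_Units by simp

lemma t_pow_inv_t_pow: "t [^] (n::nat) \<otimes> inv t [^] n = \<one>"
proof (induct n)
  case (Suc n)
  have "t [^] Suc n \<otimes> inv t [^] Suc n = t [^] n \<otimes> (t \<otimes> inv t) \<otimes> inv t [^] n"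
    using t_carrier inv_t_carrier nat_pow_Suc2[OF inv_t_carrier, of n] by (simp add: m_assoc)
  then show ?case using Suc t_inv_t t_carrier inv_t_carrier by simp
qed simp

lemma inv_t_pow_t_pow: "inv t [^] (n::nat) \<otimes> t [^] n = \<one>"
proof (induct n)
  case (Suc n)
  have "inv t [^] Suc n \<otimes> t [^] Suc n = inv t [^] n \<otimes> (inv t \<otimes> t) \<otimes> t [^] n"
    using t_carrier inv_t_carrier nat_pow_Suc2[OF t_carrier, of n] by (simp add: m_assoc)
  then show ?case using Suc inv_t_t t_carrier inv_t_carrier by simp
qed simp

lemma t_pow_commute: "a \<in> D \<Longrightarrow> t [^] (n::nat) \<otimes> a = (\<sigma> ^^ n) a \<otimes> t [^] n"
proof (induct n arbitrary: a)
  case (Suc n)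
  have "t [^] Suc n \<otimes> a = t [^] n \<otimes> (t \<otimes> a)" using Suc t_carrier D_carrier by (simp add: m_assoc)
  also have "\<dots> = (t [^] n \<otimes> \<sigma> a) \<otimes> t"
    using t_commute[OF Suc(2)] Suc(2) t_carrier D_carrier sigma_D by (simp add: m_assoc)
  also have "\<dots> = (\<sigma> ^^ n) (\<sigma> a) \<otimes> t [^] Suc n"
    unfolding Suc(1)[OF sigma_D[OF Suc(2)]]
    using t_carrier D_carrier sigma_D sigma_pow_D Suc(2) by (simp add: m_assoc)
  finally show ?case by (simp add: funpow_Suc_right del: funpow.simps)
qed (simp add: D_carrier)

lemma inv_t_commute: "a \<in> D \<Longrightarrow> inv t \<otimes> a = sigma_inv a \<otimes> inv t"
proof -
  assume a: "a \<in> D"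
  have "t \<otimes> sigma_inv a = a \<otimes> t" using t_commute[OF sigma_inv_D[OF a]] sigma_sigma_inv[OF a] by simp
  then have "inv t \<otimes> (t \<otimes> sigma_inv a) \<otimes> inv t = inv t \<otimes> (a \<otimes> t) \<otimes> inv t" by simp
  then show ?thesis using a sigma_inv_D[OF a] D_carrier t_carrier inv_t_carrier t_inv_t inv_t_t
    by (simp add: m_assoc[symmetric]) (simp add: m_assoc)
qed

text \<open>Multiplying by a power of t turns a relation among powers of inv t into one among powers of t.\<close>
lemma inv_t_pow_indep:
  assumes F: "finite F" and cF: "c ` F \<subseteq> D" and s: "(\<Oplus>n\<in>F. c n \<otimes> inv t [^] (n::nat)) = \<zero>"
  shows "\<forall>n\<in>F. c n = \<zero>"
proof -
  obtain N where N: "\<forall>i\<in>F. i \<le> N" using F finite_nat_set_iff_bounded_le by blast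
  have flip: "inv t [^] i \<otimes> t [^] N = t [^] (N - i)" if "i \<le> N" for i
  proof -
    have "inv t [^] i \<otimes> t [^] N = (inv t [^] i \<otimes> t [^] i) \<otimes> t [^] (N - i)"
      using that t_carrier inv_t_carrier by (simp add: m_assoc nat_pow_mult)
    then show ?thesis using inv_t_pow_t_pow t_carrier by simp
  qed
  have cC: "c n \<in> carrier K" if "n \<in> F" for n using cF that D_carrier by auto
  have "\<zero> = (\<Oplus>n\<in>F. c n \<otimes> inv t [^] n) \<otimes> t [^] N" using s t_carrier by simp
  also have "\<dots> = (\<Oplus>n\<in>F. c n \<otimes> inv t [^] n \<otimes> t [^] N)"
    by (rule finsum_ldistr) (use F t_carrier inv_t_carrier cC in auto)
  also have "\<dots> = (\<Oplus>n\<in>F. c (N - (N - n)) \<otimes> t [^] (N - n))"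
    by (rule finsum_cong') (use N flip cC t_carrier inv_t_carrier in \<open>auto simp: m_assoc\<close>)
  also have "\<dots> = (\<Oplus>j\<in>(\<lambda>i. N - i) ` F. c (N - j) \<otimes> t [^] j)"
  proof (rule finsum_reindex[symmetric])
    show "(\<lambda>j. c (N - j) \<otimes> t [^] j) \<in> (\<lambda>i. N - i) ` F \<rightarrow> carrier K"
      using N cC t_carrier by auto
    show "inj_on (\<lambda>i. N - i) F" using N by (intro inj_onI) (metis diff_diff_cancel)
  qed
  finally have "\<forall>j\<in>(\<lambda>i. N - i) ` F. c (N - j) = \<zero>"
    by (intro t_pow_indep) (use F cF N in auto)
  then show ?thesis using N by auto
qed

lemma skew_laurent_inv: "skew_laurent K D sigma_inv (inv t)"
  by (intro skew_laurent.intro[OF ring_axioms] skew_laurent_axioms.intro)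
    (use nonzero_Units one_not_zero D_subring D_inv_closed sigma_inv_aut inv_t_carrier
      inv_t_commute inv_t_pow_indep in auto)

section \<open>Skew polynomials\<close>

definition skew_poly :: "(nat \<Rightarrow> 'a) \<Rightarrow> nat set \<Rightarrow> 'a" where
  "skew_poly c F = (\<Oplus>i\<in>F. c i \<otimes> t [^] i)"

definition polys_below :: "nat \<Rightarrow> 'a set" where
  "polys_below n = {skew_poly c F | c F. finite F \<and> F \<subseteq> {..<n} \<and> c ` F \<subseteq> D}"

definition polys :: "'a set" where
  "polys = (\<Union>n. polys_below n)"

lemma coeff_carrier: "c ` F \<subseteq> D \<Longrightarrow> i \<in> F \<Longrightarrow> c i \<in> carrier K"
  using D_carrier by auto

lemma skew_poly_term_carrier:
  assumes "c ` F \<subseteq> D" "i \<in> F"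
  shows "c i \<otimes> t [^] (i::nat) \<in> carrier K"
  using coeff_carrier[OF assms] t_carrier by simp

lemma skew_poly_closed: "c ` F \<subseteq> D \<Longrightarrow> skew_poly c F \<in> carrier K"
  unfolding skew_poly_def using skew_poly_term_carrier by (intro finsum_closed) auto

lemma skew_poly_monom: "d \<in> D \<Longrightarrow> skew_poly (\<lambda>_. d) {n} = d \<otimes> t [^] n"
  unfolding skew_poly_def using D_carrier t_carrier by simp

lemma skew_poly_extend:
  assumes "finite F'" "F \<subseteq> F'" "c ` F \<subseteq> D"
  shows "skew_poly c F = skew_poly (\<lambda>i. if i \<in> F then c i else \<zero>) F'"
  unfolding skew_poly_def
  by (intro add.finprod_mono_neutral_cong_left) (use assms skew_poly_term_carrier t_carrier in auto)

lemma skew_poly_add: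
  assumes c: "c ` F \<subseteq> D" and c': "c' ` F \<subseteq> D"
  shows "skew_poly (\<lambda>i. c i \<oplus> c' i) F = skew_poly c F \<oplus> skew_poly c' F"
proof -
  have "skew_poly (\<lambda>i. c i \<oplus> c' i) F = (\<Oplus>i\<in>F. c i \<otimes> t [^] i \<oplus> c' i \<otimes> t [^] i)"
    unfolding skew_poly_def
    by (rule finsum_cong') (use coeff_carrier[OF c] coeff_carrier[OF c'] t_carrier in \<open>auto simp: l_distr\<close>)
  also have "\<dots> = skew_poly c F \<oplus> skew_poly c' F"
    unfolding skew_poly_def
    by (rule finsum_addf) (use skew_poly_term_carrier[OF c] skew_poly_term_carrier[OF c'] in auto)
  finally show ?thesis .
qed

lemma skew_poly_add_union:
  assumes F: "finite F" "c ` F \<subseteq> D" and G: "finite G" "e ` G \<subseteq> D"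
  shows "skew_poly c F \<oplus> skew_poly e G
    = skew_poly (\<lambda>i. (if i \<in> F then c i else \<zero>) \<oplus> (if i \<in> G then e i else \<zero>)) (F \<union> G)"
proof -
  have "(\<lambda>i. if i \<in> F then c i else \<zero>) ` (F \<union> G) \<subseteq> D" "(\<lambda>i. if i \<in> G then e i else \<zero>) ` (F \<union> G) \<subseteq> D"
    using F G D_zero by auto
  then show ?thesis
    using skew_poly_extend[of "F \<union> G" F c] skew_poly_extend[of "F \<union> G" G e] skew_poly_add F G by simp
qed

lemma skew_poly_lmult:
  assumes d: "d \<in> D" and F: "finite F" and c: "c ` F \<subseteq> D"
  shows "d \<otimes> skew_poly c F = skew_poly (\<lambda>i. d \<otimes> c i) F"
proof -
  have "d \<otimes> skew_poly c F = (\<Oplus>i\<in>F. d \<otimes> (c i \<otimes> t [^] i))"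
    unfolding skew_poly_def by (rule finsum_rdistr) (use F d D_carrier skew_poly_term_carrier[OF c] in auto)
  also have "\<dots> = skew_poly (\<lambda>i. d \<otimes> c i) F"
    unfolding skew_poly_def
    by (rule finsum_cong') (use coeff_carrier[OF c] d D_carrier t_carrier in \<open>auto simp: m_assoc\<close>)
  finally show ?thesis .
qed

lemma skew_poly_a_inv:
  assumes F: "finite F" and c: "c ` F \<subseteq> D"
  shows "skew_poly (\<lambda>i. \<ominus> c i) F = \<ominus> skew_poly c F"
proof -
  have "skew_poly (\<lambda>i. \<ominus> c i) F = skew_poly (\<lambda>i. \<ominus> \<one> \<otimes> c i) F"
    unfolding skew_poly_def
    by (rule finsum_cong') (use coeff_carrier[OF c] t_carrier in \<open>auto simp: l_minus\<close>)
  also have "\<dots> = \<ominus> \<one> \<otimes> skew_poly c F" using skew_poly_lmult[OF D_a_inv[OF D_one] F c] by simp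
  finally show ?thesis using skew_poly_closed[OF c] by (simp add: l_minus)
qed

lemma skew_poly_coeff_unique:
  assumes F: "finite F" "c ` F \<subseteq> D" and F': "finite F'" "c' ` F' \<subseteq> D"
    and eq: "skew_poly c F = skew_poly c' F'"
  shows "(if i \<in> F then c i else \<zero>) = (if i \<in> F' then c' i else \<zero>)"
proof -
  define e where "e = (\<lambda>i. if i \<in> F then c i else \<zero>)"
  define e' where "e' = (\<lambda>i. if i \<in> F' then c' i else \<zero>)"
  have c'_neg: "(\<lambda>i. \<ominus> c' i) ` F' \<subseteq> D" using F' D_a_inv by auto
  have "skew_poly c F \<oplus> skew_poly (\<lambda>i. \<ominus> c' i) F' = \<zero>"
    using eq skew_poly_a_inv[OF F'] skew_poly_closed[OF F'(2)] by (simp add: r_neg)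
  then have "skew_poly (\<lambda>i. e i \<oplus> (if i \<in> F' then \<ominus> c' i else \<zero>)) (F \<union> F') = \<zero>"
    unfolding e_def using skew_poly_add_union[OF F F'(1) c'_neg] by simp
  moreover have "(\<lambda>i. e i \<oplus> (if i \<in> F' then \<ominus> c' i else \<zero>)) ` (F \<union> F') \<subseteq> D"
    unfolding e_def using F F' by (auto intro!: D_add D_a_inv D_zero simp: image_subset_iff)
  ultimately have "e i \<oplus> (if i \<in> F' then \<ominus> c' i else \<zero>) = \<zero>" if "i \<in> F \<union> F'"
    using t_pow_indep[of "F \<union> F'"] F F' that unfolding skew_poly_def by blast
  then have "e i \<oplus> \<ominus> e' i = \<zero>"
    unfolding e_def e'_def by (cases "i \<in> F \<union> F'") auto
  moreover have "e i \<in> carrier K" "e' i \<in> carrier K"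
    unfolding e_def e'_def using F F' D_carrier by auto
  ultimately show ?thesis using minus_equality[of "e i" "\<ominus> e' i"] unfolding e_def e'_def by simp
qed

lemma polys_belowI:
  "finite F \<Longrightarrow> F \<subseteq> {..<n} \<Longrightarrow> c ` F \<subseteq> D \<Longrightarrow> x = skew_poly c F \<Longrightarrow> x \<in> polys_below n"
  unfolding polys_below_def by blast

lemma polys_belowE:
  assumes "x \<in> polys_below n"
  obtains c F where "finite F" "F \<subseteq> {..<n}" "c ` F \<subseteq> D" "x = skew_poly c F"
  using assms unfolding polys_below_def by blast

lemma polys_below_carrier: "x \<in> polys_below n \<Longrightarrow> x \<in> carrier K"
  using skew_poly_closed by (auto elim: polys_belowE)

lemma polys_below_mono: "n \<le> n' \<Longrightarrow> x \<in> polys_below n \<Longrightarrow> x \<in> polys_below n'"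
  unfolding polys_below_def by fastforce

lemma polys_below_zero: "\<zero> \<in> polys_below n"
  by (rule polys_belowI[of "{}" _ "\<lambda>_. \<zero>"]) (auto simp: skew_poly_def)

lemma polys_below_monom: "d \<in> D \<Longrightarrow> j < n \<Longrightarrow> d \<otimes> t [^] (j::nat) \<in> polys_below n"
  by (rule polys_belowI[of "{j}" _ "\<lambda>_. d"]) (auto simp: skew_poly_monom)

lemma polys_below_add:
  assumes x: "x \<in> polys_below n" and y: "y \<in> polys_below n"
  shows "x \<oplus> y \<in> polys_below n"
proof -
  obtain c F where c: "finite F" "F \<subseteq> {..<n}" "c ` F \<subseteq> D" "x = skew_poly c F"
    using x by (rule polys_belowE)
  obtain e G where e: "finite G" "G \<subseteq> {..<n}" "e ` G \<subseteq> D" "y = skew_poly e G"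
    using y by (rule polys_belowE)
  show ?thesis
    unfolding c(4) e(4) skew_poly_add_union[OF c(1,3) e(1,3)]
    by (rule polys_belowI) (use c e in \<open>auto intro!: D_add D_zero simp: image_subset_iff\<close>)
qed

lemma polys_below_lmult:
  assumes d: "d \<in> D" and x: "x \<in> polys_below n"
  shows "d \<otimes> x \<in> polys_below n"
proof -
  obtain c F where c: "finite F" "F \<subseteq> {..<n}" "c ` F \<subseteq> D" "x = skew_poly c F"
    using x by (rule polys_belowE)
  show ?thesis
    unfolding c(4) skew_poly_lmult[OF d c(1,3)]
    by (rule polys_belowI) (use c d in \<open>auto intro!: D_mult simp: image_subset_iff\<close>)
qed

lemma polys_below_a_inv: "x \<in> polys_below n \<Longrightarrow> \<ominus> x \<in> polys_below n"
  using polys_below_lmult[OF D_a_inv[OF D_one]] polys_below_carrier by (simp add: l_minus)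

lemma polys_below_finsum:
  "finite A \<Longrightarrow> (\<And>a. a \<in> A \<Longrightarrow> f a \<in> polys_below n) \<Longrightarrow> finsum K f A \<in> polys_below n"
proof (induct A rule: finite_induct)
  case empty then show ?case using polys_below_zero by simp
next
  case (insert a A)
  then have "finsum K f (insert a A) = f a \<oplus> finsum K f A"
    by (intro finsum_insert) (auto intro: polys_below_carrier)
  then show ?case using insert polys_below_add by auto
qed

lemma monom_in_polys_below_eq_zero:
  assumes d: "d \<in> D" and x: "d \<otimes> t [^] n \<in> polys_below n"
  shows "d = \<zero>"
proof -
  obtain c F where c: "finite F" "F \<subseteq> {..<n}" "c ` F \<subseteq> D" "d \<otimes> t [^] n = skew_poly c F"
    using x by (rule polys_belowE)
  have "(if n \<in> {n} then d else \<zero>) = (if n \<in> F then c n else \<zero>)"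
    by (rule skew_poly_coeff_unique[of "{n}" "\<lambda>_. d" F c]) (use c d skew_poly_monom in auto)
  then show ?thesis using c(2) by auto
qed

lemma monom_mult_monom:
  assumes a: "a \<in> D" and b: "b \<in> D"
  shows "(a \<otimes> t [^] (i::nat)) \<otimes> (b \<otimes> t [^] j) = (a \<otimes> (\<sigma> ^^ i) b) \<otimes> t [^] (i + j)"
proof -
  have "(a \<otimes> t [^] i) \<otimes> (b \<otimes> t [^] j) = a \<otimes> (t [^] i \<otimes> b) \<otimes> t [^] j"
    using a b D_carrier t_carrier by (simp add: m_assoc)
  also have "\<dots> = (a \<otimes> (\<sigma> ^^ i) b) \<otimes> (t [^] i \<otimes> t [^] j)"
    using t_pow_commute[OF b] a b D_carrier t_carrier sigma_pow_D by (simp add: m_assoc)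
  finally show ?thesis using t_carrier by (simp add: nat_pow_mult)
qed

lemma polys_below_mult:
  assumes x: "x \<in> polys_below n" and y: "y \<in> polys_below m"
  shows "x \<otimes> y \<in> polys_below (n + m)"
proof -
  obtain c F where c: "finite F" "F \<subseteq> {..<n}" "c ` F \<subseteq> D" "x = skew_poly c F"
    using x by (rule polys_belowE)
  obtain e G where e: "finite G" "G \<subseteq> {..<m}" "e ` G \<subseteq> D" "y = skew_poly e G"
    using y by (rule polys_belowE)
  have yC: "y \<in> carrier K" using y by (rule polys_below_carrier)
  have "x \<otimes> y = (\<Oplus>i\<in>F. (c i \<otimes> t [^] i) \<otimes> y)"
    unfolding c(4) skew_poly_def
    by (rule finsum_ldistr) (use c(1) yC skew_poly_term_carrier[OF c(3)] in auto)
  also have "\<dots> \<in> polys_below (n + m)"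
  proof (rule polys_below_finsum[OF c(1)])
    fix i assume i: "i \<in> F"
    have "(c i \<otimes> t [^] i) \<otimes> y = (\<Oplus>j\<in>G. (c i \<otimes> t [^] i) \<otimes> (e j \<otimes> t [^] j))"
      unfolding e(4) skew_poly_def
      by (rule finsum_rdistr) (use e(1) i skew_poly_term_carrier[OF c(3)] skew_poly_term_carrier[OF e(3)] in auto)
    also have "\<dots> \<in> polys_below (n + m)"
    proof (rule polys_below_finsum[OF e(1)])
      fix j assume j: "j \<in> G"
      have "c i \<in> D" "e j \<in> D" using c(3) e(3) i j by auto
      moreover have "i + j < n + m" using c(2) e(2) i j by (meson add_strict_mono lessThan_iff subsetD)
      ultimately show "(c i \<otimes> t [^] i) \<otimes> (e j \<otimes> t [^] j) \<in> polys_below (n + m)"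
        using monom_mult_monom by (auto intro!: polys_below_monom D_mult sigma_pow_D)
    qed
    finally show "(c i \<otimes> t [^] i) \<otimes> y \<in> polys_below (n + m)" .
  qed
  finally show ?thesis .
qed

lemma polys_below_subset_polys: "polys_below n \<subseteq> polys"
  unfolding polys_def by blast

lemma polys_carrier: "x \<in> polys \<Longrightarrow> x \<in> carrier K"
  unfolding polys_def using polys_below_carrier by blast

lemma polys_monom: "d \<in> D \<Longrightarrow> d \<otimes> t [^] (n::nat) \<in> polys"
  unfolding polys_def using polys_below_monom by blast

lemma D_subset_polys: "D \<subseteq> polys"
  using polys_monom D_carrier by (metis nat_pow_0 r_one subsetI)

lemma t_pow_polys: "t [^] (n::nat) \<in> polys"
  using polys_monom[OF D_one] t_carrier by simp

lemma subring_polys: "subring polys K"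
proof (rule subringI)
  show "polys \<subseteq> carrier K" using polys_carrier by blast
  show "\<one> \<in> polys" using D_subset_polys D_one by blast
  show "\<ominus> x \<in> polys" if "x \<in> polys" for x
    using that polys_below_a_inv unfolding polys_def by blast
  show "x \<otimes> y \<in> polys" if "x \<in> polys" "y \<in> polys" for x y
    using that polys_below_mult unfolding polys_def by blast
  show "x \<oplus> y \<in> polys" if xy: "x \<in> polys" "y \<in> polys" for x y
  proof -
    obtain n m where "x \<in> polys_below n" "y \<in> polys_below m" using xy unfolding polys_def by blast
    then have "x \<in> polys_below (max n m)" "y \<in> polys_below (max n m)"
      by (meson max.cobounded1 max.cobounded2 polys_below_mono)+
    then show ?thesis using polys_below_add unfolding polys_def by blast
  qed
qed

lemma polys_conj_t_pow:
  assumes "x \<in> polys"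
  shows "inv t [^] (N::nat) \<otimes> x \<otimes> t [^] N \<in> polys"
proof -
  obtain n where x: "x \<in> polys_below n" using assms unfolding polys_def by blast
  obtain c F where c: "finite F" "F \<subseteq> {..<n}" "c ` F \<subseteq> D" "x = skew_poly c F"
    using x by (rule polys_belowE)
  have "inv t [^] N \<otimes> x \<otimes> t [^] N = (\<Oplus>i\<in>F. inv t [^] N \<otimes> (c i \<otimes> t [^] i) \<otimes> t [^] N)"
    unfolding c(4) skew_poly_def
    using c(1) skew_poly_term_carrier[OF c(3)] inv_t_carrier t_carrier
    by (simp add: finsum_ldistr finsum_rdistr)
  also have "\<dots> \<in> polys_below n"
  proof (rule polys_below_finsum[OF c(1)])
    fix i assume i: "i \<in> F"
    then have ci: "c i \<in> D" using c by auto
    have "inv t [^] N \<otimes> (c i \<otimes> t [^] i) \<otimes> t [^] N = (inv t [^] N \<otimes> c i) \<otimes> (t [^] N \<otimes> t [^] i)"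
      using ci D_carrier inv_t_carrier t_carrier nat_pow_comm[OF t_carrier, of i N] by (simp add: m_assoc)
    also have "\<dots> = (sigma_inv ^^ N) (c i) \<otimes> (inv t [^] N \<otimes> t [^] N) \<otimes> t [^] i"
      using skew_laurent.t_pow_commute[OF skew_laurent_inv ci, of N] ci D_carrier inv_t_carrier
        t_carrier sigma_inv_pow_D by (simp add: m_assoc)
    finally show "inv t [^] N \<otimes> (c i \<otimes> t [^] i) \<otimes> t [^] N \<in> polys_below n"
      using inv_t_pow_t_pow ci D_carrier sigma_inv_pow_D t_carrier i c(2)
      by (auto intro!: polys_below_monom)
  qed
  finally show ?thesis using polys_below_subset_polys by blast
qed

definition has_lead :: "'a \<Rightarrow> nat \<Rightarrow> 'a \<Rightarrow> bool" where
  "has_lead x d e \<longleftrightarrow> e \<in> D \<and> (\<exists>r\<in>polys_below d. x = e \<otimes> t [^] d \<oplus> r)"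

lemma has_lead_polys_below: "has_lead x d e \<Longrightarrow> x \<in> polys_below (Suc d)"
  unfolding has_lead_def using polys_below_add polys_below_monom polys_below_mono
  by (metis le_SucI lessI order_refl)

lemma has_lead_add:
  assumes x: "has_lead x d e" and y: "y \<in> polys_below d"
  shows "has_lead (x \<oplus> y) d e"
proof -
  obtain r where r: "e \<in> D" "r \<in> polys_below d" "x = e \<otimes> t [^] d \<oplus> r"
    using x unfolding has_lead_def by auto
  have "x \<oplus> y = e \<otimes> t [^] d \<oplus> (r \<oplus> y)"
    using r y polys_below_carrier D_carrier t_carrier by (simp add: a_assoc)
  then show ?thesis unfolding has_lead_def using r polys_below_add y by blast
qed

lemma has_lead_lmult:
  assumes x: "has_lead x d e" and f: "f \<in> D"
  shows "has_lead (f \<otimes> x) d (f \<otimes> e)"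
proof -
  obtain r where r: "e \<in> D" "r \<in> polys_below d" "x = e \<otimes> t [^] d \<oplus> r"
    using x unfolding has_lead_def by auto
  have "f \<otimes> x = (f \<otimes> e) \<otimes> t [^] d \<oplus> f \<otimes> r"
    using r f polys_below_carrier D_carrier t_carrier by (simp add: r_distr m_assoc)
  then show ?thesis unfolding has_lead_def using r f polys_below_lmult D_mult by blast
qed

lemma has_lead_zero: "has_lead \<zero> d e \<Longrightarrow> e = \<zero>"
proof -
  assume "has_lead \<zero> d e"
  then obtain r where r: "e \<in> D" "r \<in> polys_below d" "\<zero> = e \<otimes> t [^] d \<oplus> r"
    unfolding has_lead_def by auto
  then have "\<ominus> r = e \<otimes> t [^] d"
    using minus_equality[of "e \<otimes> t [^] d" r] polys_below_carrier D_carrier t_carrier by simp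
  then show ?thesis using monom_in_polys_below_eq_zero r polys_below_a_inv by metis
qed

definition laurent :: "'a set" where
  "laurent = generate_ring K (D \<union> {t, inv t})"

lemma laurent_generators_carrier: "D \<union> {t, inv t} \<subseteq> carrier K"
  using D_carrier t_carrier inv_t_carrier by auto

lemma subring_laurent: "subring laurent K"
  unfolding laurent_def using generate_ring_is_subring[OF laurent_generators_carrier] .

lemma laurent_carrier: "laurent \<subseteq> carrier K"
  using subringE(1)[OF subring_laurent] .

lemma D_subset_laurent: "D \<subseteq> laurent"
  unfolding laurent_def by (auto intro: generate_ring.incl)

lemma t_laurent: "t \<in> laurent" and inv_t_laurent: "inv t \<in> laurent"
  unfolding laurent_def by (auto intro: generate_ring.incl)

lemma t_pow_laurent: "t [^] (n::nat) \<in> laurent" and inv_t_pow_laurent: "inv t [^] (n::nat) \<in> laurent"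
  by (induct n) (auto intro: subringE(3,6)[OF subring_laurent] t_laurent inv_t_laurent)

lemma laurent_inv: "skew_laurent.laurent K D (inv t) = laurent"
  unfolding skew_laurent.laurent_def[OF skew_laurent_inv] laurent_def inv_inv_t
  by (simp add: insert_commute)

lemma polys_denominator_add:
  assumes xy: "x \<in> carrier K" "y \<in> carrier K"
    and M: "x \<otimes> t [^] (M::nat) \<in> polys" and N: "y \<otimes> t [^] (N::nat) \<in> polys"
  shows "(x \<oplus> y) \<otimes> t [^] (M + N) \<in> polys"
proof -
  have "(x \<oplus> y) \<otimes> t [^] (M + N) = (x \<otimes> t [^] M) \<otimes> t [^] N \<oplus> (y \<otimes> t [^] N) \<otimes> t [^] M"
    using xy t_carrier by (simp add: l_distr m_assoc nat_pow_mult add.commute[of M N])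
  then show ?thesis using M N subringE(6,7)[OF subring_polys] t_pow_polys by metis
qed

lemma polys_denominator_mult:
  assumes xy: "x \<in> carrier K" "y \<in> carrier K"
    and M: "x \<otimes> t [^] (M::nat) \<in> polys" and N: "y \<otimes> t [^] (N::nat) \<in> polys"
  shows "(x \<otimes> y) \<otimes> t [^] (N + M) \<in> polys"
proof -
  have "(x \<otimes> t [^] M) \<otimes> (inv t [^] M \<otimes> (y \<otimes> t [^] N) \<otimes> t [^] M)
      = x \<otimes> (t [^] M \<otimes> inv t [^] M) \<otimes> y \<otimes> (t [^] N \<otimes> t [^] M)"
    using xy t_carrier inv_t_carrier by (simp add: m_assoc)
  also have "\<dots> = (x \<otimes> y) \<otimes> t [^] (N + M)"
    using xy t_carrier t_pow_inv_t_pow by (simp add: m_assoc nat_pow_mult)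
  finally show ?thesis using M N subringE(6)[OF subring_polys] polys_conj_t_pow by metis
qed

lemma laurent_denominator:
  assumes "x \<in> laurent"
  shows "\<exists>N. x \<otimes> t [^] (N::nat) \<in> polys"
  using assms unfolding laurent_def
proof (induct rule: generate_ring.induct)
  case one
  then show ?case using D_subset_polys D_one by (intro exI[of _ 0]) auto
next
  case (incl h)
  then consider "h \<in> D" | "h = t" | "h = inv t" by auto
  then show ?case
  proof cases
    case 1
    then show ?thesis using D_subset_polys D_carrier by (intro exI[of _ 0]) auto
  next
    case 2
    then show ?thesis using t_pow_polys[of 1] t_carrier by (intro exI[of _ 0]) simp
  next
    case 3
    have "inv t \<otimes> t [^] (1::nat) = \<one>" using inv_t_t t_carrier by simp
    then show ?thesis using 3 D_subset_polys D_one by (intro exI[of _ 1]) auto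
  qed
next
  case (a_inv h)
  then obtain N where N: "h \<otimes> t [^] (N::nat) \<in> polys" by auto
  have "h \<in> carrier K" using a_inv(1) generate_ring_in_carrier[OF laurent_generators_carrier] by simp
  then have "\<ominus> h \<otimes> t [^] N = \<ominus> (h \<otimes> t [^] N)" using t_carrier by (simp add: l_minus)
  then show ?case using subringE(5)[OF subring_polys N] by metis
next
  case (eng_add h1 h2)
  then show ?case
    using polys_denominator_add generate_ring_in_carrier[OF laurent_generators_carrier] by blast
next
  case (eng_mult h1 h2)
  then show ?case
    using polys_denominator_mult generate_ring_in_carrier[OF laurent_generators_carrier] by blast
qed

lemma laurent_common_denominator:
  assumes "finite G" "G \<subseteq> laurent"
  shows "\<exists>N. \<forall>g\<in>G. g \<otimes> t [^] (N::nat) \<in> polys"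
proof -
  obtain n where n: "\<forall>g\<in>G. g \<otimes> t [^] (n g :: nat) \<in> polys"
    using laurent_denominator assms(2) by (metis subsetD)
  define N where "N = Max (n ` G)"
  have "g \<otimes> t [^] N \<in> polys" if g: "g \<in> G" for g
  proof -
    have "n g \<le> N" unfolding N_def using assms(1) g by simp
    then have "g \<otimes> t [^] N = (g \<otimes> t [^] n g) \<otimes> t [^] (N - n g)"
      using g assms(2) laurent_carrier t_carrier by (auto simp: m_assoc nat_pow_mult)
    then show ?thesis using n g subringE(6)[OF subring_polys] t_pow_polys by metis
  qed
  then show ?thesis by blast
qed

lemma inv_t_notin_polys: "inv t \<notin> polys"
proof
  assume "inv t \<in> polys"
  then obtain c F where c: "finite F" "c ` F \<subseteq> D" "inv t = skew_poly c F"
    unfolding polys_def by (auto elim: polys_belowE)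
  have "\<one> = skew_poly c F \<otimes> t" using c(3) inv_t_t by simp
  also have "\<dots> = (\<Oplus>i\<in>F. c i \<otimes> t [^] i \<otimes> t)"
    unfolding skew_poly_def by (rule finsum_ldistr) (use c skew_poly_term_carrier t_carrier in auto)
  also have "\<dots> = (\<Oplus>i\<in>F. c (Suc i - 1) \<otimes> t [^] (Suc i))"
    by (rule finsum_cong') (use coeff_carrier[OF c(2)] t_carrier in \<open>auto simp: m_assoc\<close>)
  also have "\<dots> = skew_poly (\<lambda>j. c (j - 1)) (Suc ` F)"
    unfolding skew_poly_def
    by (rule finsum_reindex[symmetric]) (use coeff_carrier[OF c(2)] t_carrier in auto)
  finally have "skew_poly (\<lambda>j. c (j - 1)) (Suc ` F) = \<one>" by simp
  moreover have "skew_poly (\<lambda>_. \<one>) {0} = \<one>" using skew_poly_monom[OF D_one, of 0] t_carrier by simp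
  ultimately have "skew_poly (\<lambda>_. \<one>) {0} = skew_poly (\<lambda>j. c (j - 1)) (Suc ` F)" by simp
  then have "(if (0::nat) \<in> {0} then \<one> else \<zero>) = (if 0 \<in> Suc ` F then c (0 - 1) else \<zero>)"
    by (rule skew_poly_coeff_unique[rotated 4]) (use c D_one in auto)
  then show False using one_not_zero by auto
qed

lemma not_fin_gen_over_polys:
  assumes B: "B \<subseteq> polys"
  shows "\<not> fin_gen_left_module K B laurent"
proof
  assume "fin_gen_left_module K B laurent"
  then obtain G where G: "finite G" "G \<subseteq> laurent" and span: "laurent = left_span K B G"
    unfolding fin_gen_left_module_iff_left_span by blast
  obtain N :: nat where N: "\<forall>g\<in>G. g \<otimes> t [^] N \<in> polys"
    using laurent_common_denominator[OF G] by blast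
  obtain b where b: "b ` G \<subseteq> B" "inv t [^] Suc N = (\<Oplus>g\<in>G. b g \<otimes> g)"
    using span inv_t_pow_laurent[of "Suc N"] unfolding left_span_def by blast
  have bC: "b g \<in> carrier K" and gC: "g \<in> carrier K" if "g \<in> G" for g
    using that b(1) B G(2) polys_carrier laurent_carrier by auto
  have "inv t = inv t [^] Suc N \<otimes> t [^] N"
    using inv_t_carrier t_carrier inv_t_pow_t_pow nat_pow_Suc2[OF inv_t_carrier, of N]
    by (simp add: m_assoc)
  also have "\<dots> = (\<Oplus>g\<in>G. b g \<otimes> g \<otimes> t [^] N)"
    unfolding b(2) by (rule finsum_ldistr) (use G(1) bC gC t_carrier in auto)
  also have "\<dots> = (\<Oplus>g\<in>G. b g \<otimes> (g \<otimes> t [^] N))"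
    by (rule finsum_cong') (use bC gC t_carrier in \<open>auto simp: m_assoc\<close>)
  also have "\<dots> \<in> polys"
    by (rule finsum_subring_closed[OF subring_polys G(1)])
      (use b(1) B N in \<open>blast intro: subringE(6)[OF subring_polys]\<close>)
  finally show False using inv_t_notin_polys by simp
qed

section \<open>Automorphic elements when no power of \<sigma> is inner\<close>

lemma finite_inner_orderI:
  assumes k: "0 < k" and e: "e \<in> D" "e \<noteq> \<zero>"
    and conj: "\<And>r. r \<in> D \<Longrightarrow> (\<sigma> ^^ k) r = e \<otimes> r \<otimes> inv e"
  shows "finite_inner_order K D \<sigma>"
proof -
  have eU: "e \<in> Units (K\<lparr>carrier := D\<rparr>)"
    unfolding Units_def using e D_inv_closed nonzero_Units[OF D_carrier] by (auto intro!: bexI[of _ "inv e"])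
  have "inv\<^bsub>K\<lparr>carrier := D\<rparr>\<^esub> e = inv e"
    using m_inv_monoid_consistent[OF eU] D_subring subring.axioms(2) by blast
  then show ?thesis unfolding finite_inner_order_def
    by (intro exI[of _ k] conjI k bexI[of _ e] eU) (simp add: conj)
qed

lemma finite_inner_orderE:
  assumes "finite_inner_order K D \<sigma>"
  obtains k c where "0 < k" "c \<in> D" "c \<noteq> \<zero>" "\<And>r. r \<in> D \<Longrightarrow> (\<sigma> ^^ k) r = c \<otimes> r \<otimes> inv c"
proof -
  obtain k c where k: "0 < k" and cU: "c \<in> Units (K\<lparr>carrier := D\<rparr>)"
    and conj: "\<forall>r\<in>D. (\<sigma> ^^ k) r = c \<otimes> r \<otimes> inv\<^bsub>K\<lparr>carrier := D\<rparr>\<^esub> c"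
    using assms unfolding finite_inner_order_def by auto
  have "inv\<^bsub>K\<lparr>carrier := D\<rparr>\<^esub> c = inv c"
    using m_inv_monoid_consistent[OF cU] D_subring subring.axioms(2) by blast
  moreover have "c \<in> D" "c \<noteq> \<zero>" using cU one_not_zero D_carrier unfolding Units_def by auto
  ultimately show ?thesis using that k conj by auto
qed

text \<open>The power i' - i of \<sigma> turns out to be conjugation by inv a' \<otimes> a.\<close>
lemma twisted_coeffs_imp_finite_inner_order:
  assumes a: "a \<in> D" "a \<noteq> \<zero>" and a': "a' \<in> D" "a' \<noteq> \<zero>" and ii': "i < i'"
    and T: "\<And>b. b \<in> D \<Longrightarrow> T b \<in> D"
    and rel: "\<And>b. b \<in> D \<Longrightarrow> a \<otimes> (\<sigma> ^^ i) b = T b \<otimes> a"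
    and rel': "\<And>b. b \<in> D \<Longrightarrow> a' \<otimes> (\<sigma> ^^ i') b = T b \<otimes> a'"
  shows "finite_inner_order K D \<sigma>"
proof (rule finite_inner_orderI)
  have aC: "a \<in> carrier K" "a' \<in> carrier K" using a a' D_carrier by auto
  have aU: "a \<in> Units K" "a' \<in> Units K" using nonzero_Units aC a a' by auto
  define e where "e = inv a' \<otimes> a"
  show "0 < i' - i" using ii' by simp
  show "e \<in> D" unfolding e_def using D_inv_closed a a' D_mult by auto
  show "e \<noteq> \<zero>" unfolding e_def using mult_nonzero inv_nonzero aC aU a a' by auto
  have inv_e: "inv e = inv a \<otimes> a'"
    using inv_unique'[of e "inv a \<otimes> a'"] aU aC unfolding e_def
    by (simp add: m_assoc) (simp add: m_assoc[symmetric])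
  fix r assume r: "r \<in> D"
  define b where "b = (sigma_inv ^^ i) r"
  have b: "b \<in> D" "(\<sigma> ^^ i) b = r" unfolding b_def using sigma_inv_pow_D sigma_pow_sigma_inv_pow r by auto
  have b': "(\<sigma> ^^ i') b = (\<sigma> ^^ (i' - i)) r"
    using b(2) ii' funpow_add[of "i' - i" i \<sigma>] by simp
  have TbC: "T b \<in> carrier K" using T[OF b(1)] D_carrier by simp
  have "T b = T b \<otimes> a \<otimes> inv a" using aU aC TbC by (simp add: m_assoc)
  also have "\<dots> = a \<otimes> r \<otimes> inv a" using rel[OF b(1)] b(2) by simp
  finally have Tb: "T b = a \<otimes> r \<otimes> inv a" .
  have "(\<sigma> ^^ (i' - i)) r = inv a' \<otimes> (a' \<otimes> (\<sigma> ^^ (i' - i)) r)"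
    using aU aC sigma_pow_D[OF r] D_carrier by (simp add: m_assoc[symmetric])
  also have "\<dots> = inv a' \<otimes> (T b \<otimes> a')" using rel'[OF b(1)] b' by simp
  also have "\<dots> = e \<otimes> r \<otimes> inv e"
    unfolding Tb inv_e unfolding e_def using aU aC r D_carrier by (simp add: m_assoc)
  finally show "(\<sigma> ^^ (i' - i)) r = e \<otimes> r \<otimes> inv e" .
qed

lemma automorphic_coeff_twist:
  assumes x: "x \<in> carrier K" and aut: "\<And>b. b \<in> D \<Longrightarrow> x \<otimes> b = \<tau> b \<otimes> x"
    and \<tau>: "\<And>b. b \<in> D \<Longrightarrow> \<tau> b \<in> D"
    and c: "finite F" "c ` F \<subseteq> D" "x \<otimes> t [^] N = skew_poly c F"
    and b: "b \<in> D" and j: "j \<in> F"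
  shows "c j \<otimes> (\<sigma> ^^ j) b = \<tau> ((\<sigma> ^^ N) b) \<otimes> c j"
proof -
  define T where "T = \<tau> ((\<sigma> ^^ N) b)"
  have T_D: "T \<in> D" unfolding T_def using \<tau> sigma_pow_D b by auto
  note cC = coeff_carrier[OF c(2)]
  have "x \<otimes> t [^] N \<otimes> b = (\<Oplus>i\<in>F. c i \<otimes> t [^] i \<otimes> b)"
    unfolding c(3) skew_poly_def
    by (rule finsum_ldistr) (use c(1) cC t_carrier b D_carrier in auto)
  also have "\<dots> = skew_poly (\<lambda>i. c i \<otimes> (\<sigma> ^^ i) b) F"
    unfolding skew_poly_def
    by (rule finsum_cong') (use cC t_carrier b D_carrier t_pow_commute sigma_pow_D in \<open>auto simp: m_assoc\<close>)
  finally have lhs: "x \<otimes> t [^] N \<otimes> b = skew_poly (\<lambda>i. c i \<otimes> (\<sigma> ^^ i) b) F" .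
  have "x \<otimes> t [^] N \<otimes> b = (x \<otimes> (\<sigma> ^^ N) b) \<otimes> t [^] N"
    using x t_carrier b D_carrier sigma_pow_D t_pow_commute[OF b, of N] by (simp add: m_assoc)
  also have "\<dots> = T \<otimes> (x \<otimes> t [^] N)"
    unfolding T_def using aut sigma_pow_D[OF b, of N] x t_carrier D_carrier \<tau> by (simp add: m_assoc)
  also have "\<dots> = skew_poly (\<lambda>i. T \<otimes> c i) F"
    unfolding c(3) by (rule skew_poly_lmult[OF T_D c(1,2)])
  finally have rhs: "x \<otimes> t [^] N \<otimes> b = skew_poly (\<lambda>i. T \<otimes> c i) F" .
  have "(\<lambda>i. c i \<otimes> (\<sigma> ^^ i) b) ` F \<subseteq> D" "(\<lambda>i. T \<otimes> c i) ` F \<subseteq> D"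
    using c(2) b T_D by (auto intro!: D_mult sigma_pow_D)
  from skew_poly_coeff_unique[OF c(1) this(1) c(1) this(2), of j] lhs rhs
  show ?thesis using j T_def by simp
qed

lemma t_pow_mult_inv_t_pow:
  "t [^] (M::nat) \<otimes> inv t [^] (N::nat) = (if N \<le> M then t [^] (M - N) else inv t [^] (N - M))"
proof (cases "N \<le> M")
  case True
  then have "t [^] M = t [^] (M - N) \<otimes> t [^] N" using t_carrier by (simp add: nat_pow_mult)
  then show ?thesis using True t_carrier inv_t_carrier t_pow_inv_t_pow by (simp add: m_assoc)
next
  case False
  then have "inv t [^] N = inv t [^] M \<otimes> inv t [^] (N - M)" using inv_t_carrier by (simp add: nat_pow_mult)
  then show ?thesis using False t_carrier inv_t_carrier t_pow_inv_t_pow by (simp add: m_assoc[symmetric])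
qed

lemma automorphic_coeffs_single:
  assumes nf: "\<not> finite_inner_order K D \<sigma>" and x: "x \<in> carrier K"
    and aut: "\<And>b. b \<in> D \<Longrightarrow> x \<otimes> b = \<tau> b \<otimes> x" and \<tau>: "\<And>b. b \<in> D \<Longrightarrow> \<tau> b \<in> D"
    and c: "finite F" "c ` F \<subseteq> D" "x \<otimes> t [^] (N::nat) = skew_poly c F"
    and i: "i \<in> F" "c i \<noteq> \<zero>" and i': "i' \<in> F" "c i' \<noteq> \<zero>"
  shows "i = i'"
proof -
  note twist = automorphic_coeff_twist[OF x aut \<tau> c]
  have "finite_inner_order K D \<sigma>" if "j \<in> F" "c j \<noteq> \<zero>" "j' \<in> F" "c j' \<noteq> \<zero>" "j < j'" for j j'
    by (rule twisted_coeffs_imp_finite_inner_order[OF _ _ _ _ \<open>j < j'\<close>, of "c j" "c j'" "\<lambda>b. \<tau> ((\<sigma> ^^ N) b)"])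
      (use that c(2) twist \<tau> sigma_pow_D in auto)
  then show ?thesis using nf i i' by (metis linorder_neqE_nat)
qed

lemma automorphic_laurent_monomial:
  assumes nf: "\<not> finite_inner_order K D \<sigma>" and x: "x \<in> laurent"
    and aut: "\<And>b. b \<in> D \<Longrightarrow> x \<otimes> b = \<tau> b \<otimes> x" and \<tau>: "\<And>b. b \<in> D \<Longrightarrow> \<tau> b \<in> D"
  shows "\<exists>e\<in>D. \<exists>n::nat. x = e \<otimes> t [^] n \<or> x = e \<otimes> inv t [^] n"
proof -
  have xC: "x \<in> carrier K" using x laurent_carrier by auto
  obtain N :: nat where "x \<otimes> t [^] N \<in> polys" using laurent_denominator[OF x] by auto
  then obtain c F where c: "finite F" "c ` F \<subseteq> D" "x \<otimes> t [^] N = skew_poly c F"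
    unfolding polys_def by (auto elim: polys_belowE)
  define F0 where "F0 = {i \<in> F. c i \<noteq> \<zero>}"
  have "skew_poly c F0 = skew_poly (\<lambda>i. if i \<in> F0 then c i else \<zero>) F"
    using skew_poly_extend[OF c(1), of F0 c] c(2) unfolding F0_def by auto
  also have "\<dots> = x \<otimes> t [^] N"
    unfolding c(3) skew_poly_def by (rule finsum_cong') (use c(2) D_carrier t_carrier F0_def in auto)
  finally have xN: "x \<otimes> t [^] N = skew_poly c F0" ..
  obtain e M where e: "e \<in> D" "x \<otimes> t [^] N = e \<otimes> t [^] (M::nat)"
  proof (cases "F0 = {}")
    case True
    then show ?thesis using that[of \<zero> 0] xN D_zero t_carrier by (simp add: skew_poly_def)
  next
    case False
    then obtain M where M: "F0 = {M}"
      using automorphic_coeffs_single[OF nf xC aut \<tau> c] unfolding F0_def by blast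
    then have "c M \<in> D" using c(2) F0_def by auto
    then show ?thesis using that[of "c M" M] xN M D_carrier t_carrier by (simp add: skew_poly_def)
  qed
  have "x = x \<otimes> t [^] N \<otimes> inv t [^] N"
    using xC t_carrier inv_t_carrier t_pow_inv_t_pow by (simp add: m_assoc)
  then have "x = e \<otimes> (t [^] M \<otimes> inv t [^] N)"
    using e D_carrier t_carrier inv_t_carrier by (simp add: m_assoc)
  then show ?thesis using e(1) unfolding t_pow_mult_inv_t_pow by (auto split: if_splits)
qed

lemma monom_pow:
  assumes e: "e \<in> D"
  obtains f where "f \<in> D" "(e \<otimes> t [^] (p::nat)) [^] (q::nat) = f \<otimes> t [^] (p * q)" "e \<noteq> \<zero> \<Longrightarrow> f \<noteq> \<zero>"
proof -
  have "\<exists>f\<in>D. (e \<otimes> t [^] p) [^] q = f \<otimes> t [^] (p * q) \<and> (e \<noteq> \<zero> \<longrightarrow> f \<noteq> \<zero>)"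
  proof (induct q)
    case 0
    then show ?case using D_one one_not_zero t_carrier by (intro bexI[of _ "\<one>"]) auto
  next
    case (Suc q)
    then obtain f where f: "f \<in> D" "(e \<otimes> t [^] p) [^] q = f \<otimes> t [^] (p * q)" "e \<noteq> \<zero> \<longrightarrow> f \<noteq> \<zero>"
      by auto
    have "(e \<otimes> t [^] p) [^] Suc q = (f \<otimes> (\<sigma> ^^ (p * q)) e) \<otimes> t [^] (p * Suc q)"
      using f(2) monom_mult_monom[OF f(1) e, of "p * q" p] by (simp add: add.commute)
    then show ?case
      using f e mult_nonzero D_carrier sigma_pow_D sigma_pow_nonzero
      by (intro bexI[of _ "f \<otimes> (\<sigma> ^^ (p * q)) e"]) (auto intro: D_mult)
  qed
  then show ?thesis using that by blast
qed

lemma monom_mult_inv_monom: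
  assumes f: "f \<in> D" "f' \<in> D"
  shows "(f \<otimes> t [^] (n::nat)) \<otimes> (f' \<otimes> inv t [^] n) \<in> D"
proof -
  have "(f \<otimes> t [^] n) \<otimes> (f' \<otimes> inv t [^] n) = f \<otimes> (t [^] n \<otimes> f') \<otimes> inv t [^] n"
    using f D_carrier t_carrier inv_t_carrier by (simp add: m_assoc)
  also have "\<dots> = f \<otimes> (\<sigma> ^^ n) f' \<otimes> (t [^] n \<otimes> inv t [^] n)"
    using t_pow_commute[OF f(2)] f D_carrier t_carrier inv_t_carrier sigma_pow_D by (simp add: m_assoc)
  also have "\<dots> = f \<otimes> (\<sigma> ^^ n) f'" using t_pow_inv_t_pow f D_carrier sigma_pow_D by simp
  finally show ?thesis using f D_mult sigma_pow_D by simp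
qed

lemma monomials_in_t_not_fin_gen:
  assumes "\<forall>i<m. \<exists>e\<in>D. \<exists>n::nat. a i = e \<otimes> t [^] n"
  shows "\<not> fin_gen_left_module K (generate_ring K (D \<union> a ` {..<m})) laurent"
proof -
  have "D \<union> a ` {..<m} \<subseteq> polys" using assms D_subset_polys polys_monom by auto
  then have "generate_ring K (D \<union> a ` {..<m}) \<subseteq> polys"
    using polys_carrier by (intro generate_ring_min_subring1[OF _ subring_polys]) auto
  then show ?thesis by (rule not_fin_gen_over_polys)
qed

lemma opposite_monomials_not_alg_indep:
  assumes jl: "j < m" "l < m" "j \<noteq> l"
    and e: "e \<in> D" "a j = e \<otimes> t [^] (p::nat)" "0 < p"
    and e': "e' \<in> D" "a l = e' \<otimes> inv t [^] (q::nat)" "0 < q"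
  shows "\<not> left_alg_indep K D m a"
proof
  assume indep: "left_alg_indep K D m a"
  interpret inv: skew_laurent K D sigma_inv "inv t" by (rule skew_laurent_inv)
  obtain f where f: "f \<in> D" "a j [^] q = f \<otimes> t [^] (p * q)" using monom_pow[OF e(1)] e(2) by metis
  obtain f' where f': "f' \<in> D" "a l [^] p = f' \<otimes> inv t [^] (p * q)"
    using inv.monom_pow[OF e'(1)] e'(2) by (metis mult.commute)
  have "a j \<in> carrier K" "a l \<in> carrier K"
    using e e' D_carrier t_carrier inv_t_carrier by auto
  moreover have "a j [^] q \<otimes> a l [^] p \<in> D" using monom_mult_inv_monom f f' by simp
  moreover have "a l [^] p \<otimes> a j [^] q \<in> D" using inv.monom_mult_inv_monom f f' inv_inv_t by simp
  ultimately show False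
    using left_alg_indep_pow_mult_pow_notin[OF indep D_subring one_not_zero] jl e(3) e'(3)
    by (metis linorder_neqE_nat)
qed

lemma aut_normalizable_laurent_imp_finite_inner_order:
  assumes "automorphically_normalizable K D laurent"
  shows "finite_inner_order K D \<sigma>"
proof (rule ccontr)
  assume nf: "\<not> finite_inner_order K D \<sigma>"
  interpret inv: skew_laurent K D sigma_inv "inv t" by (rule skew_laurent_inv)
  obtain m a \<tau> where a_laurent: "\<forall>i<m. a i \<in> laurent"
    and \<tau>: "\<forall>i<m. \<tau> i \<in> ring_aut K D \<and> automorphic K D (\<tau> i) (a i)"
    and indep: "left_alg_indep K D m a"
    and fg: "fin_gen_left_module K (generate_ring K (D \<union> a ` {..<m})) laurent"
    using assms unfolding automorphically_normalizable_def by blast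
  have monomial: "\<exists>e\<in>D. \<exists>n::nat. a i = e \<otimes> t [^] n \<or> a i = e \<otimes> inv t [^] n" if i: "i < m" for i
    by (rule automorphic_laurent_monomial[OF nf, of "a i" "\<tau> i"])
      (use a_laurent \<tau> i in \<open>auto simp: automorphic_def intro: ring_aut_closed\<close>)
  consider (pos) "\<forall>i<m. \<exists>e\<in>D. \<exists>n::nat. a i = e \<otimes> t [^] n"
    | (neg) "\<forall>i<m. \<exists>e\<in>D. \<exists>n::nat. a i = e \<otimes> inv t [^] n"
    | (mixed) j l where "j < m" "\<not> (\<exists>e\<in>D. \<exists>n::nat. a j = e \<otimes> inv t [^] n)"
                        "l < m" "\<not> (\<exists>e\<in>D. \<exists>n::nat. a l = e \<otimes> t [^] n)"
    by blast
  then show False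
  proof cases
    case pos
    then show False using monomials_in_t_not_fin_gen fg by blast
  next
    case neg
    then show False using inv.monomials_in_t_not_fin_gen fg laurent_inv by metis
  next
    case mixed
    obtain e p where e: "e \<in> D" "a j = e \<otimes> t [^] (p::nat)" using monomial[OF mixed(1)] mixed(2) by blast
    obtain e' q where e': "e' \<in> D" "a l = e' \<otimes> inv t [^] (q::nat)" using monomial[OF mixed(3)] mixed(4) by blast
    have "0 < p" using e mixed(2) by (intro Nat.gr0I) (metis nat_pow_0)
    moreover have "0 < q" using e' mixed(4) by (intro Nat.gr0I) (metis nat_pow_0)
    moreover have "j \<noteq> l" using mixed e by blast
    ultimately show False
      using opposite_monomials_not_alg_indep[OF mixed(1,3) _ e _ e'] indep by blast
  qed
qed

end

section \<open>A normalizing element from an inner power of \<sigma>\<close>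

locale skew_laurent_inner = skew_laurent +
  fixes k :: nat and c :: 'a
  assumes k_pos: "0 < k" and c_D: "c \<in> D" and c_nonzero: "c \<noteq> \<zero>"
    and sigma_pow_k: "\<And>r. r \<in> D \<Longrightarrow> (\<sigma> ^^ k) r = c \<otimes> r \<otimes> inv c"
begin

definition w :: 'a where "w = inv c \<otimes> t [^] k"
definition w' :: 'a where "w' = inv t [^] k \<otimes> c"
definition z :: 'a where "z = w \<oplus> w'"

lemma c_carrier: "c \<in> carrier K" using c_D D_carrier by simp
lemma c_Units: "c \<in> Units K" using nonzero_Units c_carrier c_nonzero by simp
lemma inv_c_D: "inv c \<in> D" using D_inv_closed c_D c_nonzero by simp
lemma inv_c_carrier: "inv c \<in> carrier K" using c_Units by simp
lemma inv_c_nonzero: "inv c \<noteq> \<zero>" using inv_nonzero c_carrier c_nonzero by simp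
lemma w_carrier: "w \<in> carrier K" unfolding w_def using inv_c_carrier t_carrier by simp
lemma w'_carrier: "w' \<in> carrier K" unfolding w'_def using c_carrier inv_t_carrier by simp
lemma z_carrier: "z \<in> carrier K" unfolding z_def using w_carrier w'_carrier by simp

lemma w_w': "w \<otimes> w' = \<one>"
proof -
  have "w \<otimes> w' = inv c \<otimes> (t [^] k \<otimes> inv t [^] k) \<otimes> c"
    unfolding w_def w'_def using inv_c_carrier c_carrier t_carrier inv_t_carrier by (simp add: m_assoc)
  then show ?thesis using t_pow_inv_t_pow c_Units by simp
qed

lemma w'_w: "w' \<otimes> w = \<one>"
proof -
  have "w' \<otimes> w = inv t [^] k \<otimes> (c \<otimes> inv c) \<otimes> t [^] k"
    unfolding w_def w'_def using inv_c_carrier c_carrier t_carrier inv_t_carrier by (simp add: m_assoc)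
  then show ?thesis using inv_t_pow_t_pow c_Units inv_t_carrier by simp
qed

lemma w_commute: "d \<in> D \<Longrightarrow> w \<otimes> d = d \<otimes> w"
proof -
  assume d: "d \<in> D"
  have "w \<otimes> d = inv c \<otimes> ((\<sigma> ^^ k) d \<otimes> t [^] k)"
    unfolding w_def using t_pow_commute[OF d] inv_c_carrier t_carrier d D_carrier by (simp add: m_assoc)
  also have "\<dots> = (inv c \<otimes> c) \<otimes> d \<otimes> (inv c \<otimes> t [^] k)"
    using sigma_pow_k[OF d] inv_c_carrier c_carrier d D_carrier t_carrier by (simp add: m_assoc)
  finally show ?thesis unfolding w_def using c_Units d D_carrier by simp
qed

lemma w'_commute: "d \<in> D \<Longrightarrow> w' \<otimes> d = d \<otimes> w'"
proof -
  assume d: "d \<in> D"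
  then have dC: "d \<in> carrier K" using D_carrier by simp
  have "w' \<otimes> d = w' \<otimes> d \<otimes> (w \<otimes> w')" using w_w' w'_carrier dC by simp
  also have "\<dots> = w' \<otimes> (w \<otimes> d) \<otimes> w'" using w_commute[OF d] w'_carrier w_carrier dC by (simp add: m_assoc)
  also have "\<dots> = d \<otimes> w'" using w'_w w'_carrier w_carrier dC by (simp add: m_assoc[symmetric])
  finally show ?thesis .
qed

lemma z_commute: "d \<in> D \<Longrightarrow> z \<otimes> d = d \<otimes> z"
  unfolding z_def using w_commute w'_commute w_carrier w'_carrier D_carrier by (simp add: l_distr r_distr)

lemma w_pow: obtains f where "f \<in> D" "f \<noteq> \<zero>" "w [^] (M::nat) = f \<otimes> t [^] (k * M)"
  using monom_pow[OF inv_c_D, of k M] inv_c_nonzero unfolding w_def by metis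

text \<open>Multiplying z^n on the right by w^M with M \<ge> n clears the negative powers of t,
  so that the leading term can be read off.\<close>
lemma z_pow_w_pow_lead:
  "n \<le> M \<Longrightarrow> \<exists>e. e \<noteq> \<zero> \<and> has_lead (z [^] n \<otimes> w [^] M) (k * (M + n)) e"
proof (induct n arbitrary: M)
  case 0
  obtain f where f: "f \<in> D" "f \<noteq> \<zero>" "w [^] M = f \<otimes> t [^] (k * M)" by (rule w_pow)
  then have "z [^] (0::nat) \<otimes> w [^] M = f \<otimes> t [^] (k * (M + 0)) \<oplus> \<zero>"
    using w_carrier D_carrier t_carrier by simp
  then show ?case unfolding has_lead_def using f polys_below_zero by blast
next
  case (Suc n)
  then obtain M' where M': "M = Suc M'" by (cases M) auto
  have "z \<otimes> w [^] M = w \<otimes> w [^] M \<oplus> (w' \<otimes> w) \<otimes> w [^] M'"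
    unfolding z_def M' using w_carrier w'_carrier by (simp add: l_distr m_assoc nat_pow_Suc2[symmetric])
  also have "\<dots> = w [^] Suc M \<oplus> w [^] M'" using w'_w w_carrier nat_pow_Suc2 by simp
  finally have "z [^] Suc n \<otimes> w [^] M = z [^] n \<otimes> w [^] Suc M \<oplus> z [^] n \<otimes> w [^] M'"
    using z_carrier w_carrier by (simp add: m_assoc r_distr)
  moreover obtain e where e: "e \<noteq> \<zero>" "has_lead (z [^] n \<otimes> w [^] Suc M) (k * (M + Suc n)) e"
    using Suc(1)[of "Suc M"] Suc(2) by auto
  moreover have "z [^] n \<otimes> w [^] M' \<in> polys_below (k * (M + Suc n))"
  proof -
    obtain e' where "has_lead (z [^] n \<otimes> w [^] M') (k * (M' + n)) e'"
      using Suc(1)[of M'] Suc(2) M' by auto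
    moreover have "Suc (k * (M' + n)) \<le> k * (M + Suc n)" using k_pos M' by simp
    ultimately show ?thesis using has_lead_polys_below polys_below_mono by blast
  qed
  ultimately show ?case using has_lead_add by metis
qed

lemma z_pow_w_pow_below: "n < M \<Longrightarrow> z [^] n \<otimes> w [^] M \<in> polys_below (k * (M + M))"
proof -
  assume "n < M"
  then obtain e where "has_lead (z [^] n \<otimes> w [^] M) (k * (M + n)) e"
    using z_pow_w_pow_lead[of n M] by auto
  moreover have "Suc (k * (M + n)) \<le> k * (M + M)" using \<open>n < M\<close> k_pos by (simp add: Suc_le_eq)
  ultimately show ?thesis using has_lead_polys_below polys_below_mono by blast
qed

lemma z_pow_indep:
  assumes F: "finite F" and a: "a ` F \<subseteq> D" and sum: "(\<Oplus>n\<in>F. a n \<otimes> z [^] (n::nat)) = \<zero>"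
  shows "\<forall>n\<in>F. a n = \<zero>"
proof (rule ccontr)
  assume "\<not> (\<forall>n\<in>F. a n = \<zero>)"
  then have F1: "{n \<in> F. a n \<noteq> \<zero>} \<noteq> {}" by auto
  define n0 where "n0 = Max {n \<in> F. a n \<noteq> \<zero>}"
  have n0: "n0 \<in> F" "a n0 \<noteq> \<zero>" using Max_in[OF _ F1] F unfolding n0_def by auto
  have below: "n < n0" if "n \<in> F" "a n \<noteq> \<zero>" "n \<noteq> n0" for n
  proof -
    have "n \<le> n0" using F that unfolding n0_def by (intro Max_ge) auto
    then show ?thesis using that(3) by simp
  qed
  note aC = coeff_carrier[OF a]
  define d where "d = k * (n0 + n0)"
  have "\<zero> = (\<Oplus>n\<in>F. a n \<otimes> z [^] n) \<otimes> w [^] n0" using sum w_carrier by simp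
  also have "\<dots> = (\<Oplus>n\<in>F. a n \<otimes> z [^] n \<otimes> w [^] n0)"
    by (rule finsum_ldistr) (use F aC z_carrier w_carrier in auto)
  also have "\<dots> = (\<Oplus>n\<in>F. a n \<otimes> (z [^] n \<otimes> w [^] n0))"
    by (rule finsum_cong') (use aC z_carrier w_carrier in \<open>auto simp: m_assoc\<close>)
  also have "\<dots> = a n0 \<otimes> (z [^] n0 \<otimes> w [^] n0) \<oplus> (\<Oplus>n\<in>F - {n0}. a n \<otimes> (z [^] n \<otimes> w [^] n0))"
    using finsum_insert[of "F - {n0}" n0 "\<lambda>n. a n \<otimes> (z [^] n \<otimes> w [^] n0)"] F n0(1) aC z_carrier w_carrier
    by (simp add: insert_absorb)
  finally have zero: "\<zero> = a n0 \<otimes> (z [^] n0 \<otimes> w [^] n0) \<oplus> (\<Oplus>n\<in>F - {n0}. a n \<otimes> (z [^] n \<otimes> w [^] n0))" .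
  obtain e where e: "e \<noteq> \<zero>" "has_lead (z [^] n0 \<otimes> w [^] n0) d e"
    using z_pow_w_pow_lead[of n0 n0] unfolding d_def by auto
  have "(\<Oplus>n\<in>F - {n0}. a n \<otimes> (z [^] n \<otimes> w [^] n0)) \<in> polys_below d"
  proof (rule polys_below_finsum)
    fix n assume n: "n \<in> F - {n0}"
    show "a n \<otimes> (z [^] n \<otimes> w [^] n0) \<in> polys_below d"
    proof (cases "a n = \<zero>")
      case False
      then show ?thesis
        unfolding d_def using below n a z_pow_w_pow_below polys_below_lmult by auto
    qed (use z_carrier w_carrier polys_below_zero in simp)
  qed (use F in simp)
  then have "has_lead \<zero> d (a n0 \<otimes> e)"
    using has_lead_add[OF has_lead_lmult[OF e(2)]] zero a n0(1) by auto
  then have "a n0 \<otimes> e = \<zero>" by (rule has_lead_zero)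
  moreover have "e \<in> D" using e(2) unfolding has_lead_def by simp
  ultimately show False using mult_nonzero aC[OF n0(1)] n0(2) e(1) D_carrier by blast
qed

lemma z_alg_indep: "left_alg_indep K D 1 (\<lambda>_. z)"
  using left_alg_indep_single_varI[OF z_carrier _ z_pow_indep] D_carrier by blast

lemma w_sq: "w \<otimes> w = z \<otimes> w \<ominus> \<one>"
proof -
  have "z \<otimes> w = w \<otimes> w \<oplus> \<one>" unfolding z_def using w_carrier w'_carrier w'_w by (simp add: l_distr)
  then show ?thesis using w_carrier by (simp add: a_minus_def a_assoc r_neg)
qed

lemma t_pow_2k: "t [^] (2 * k) = (c \<otimes> c \<otimes> z \<otimes> inv c) \<otimes> t [^] k \<oplus> (\<ominus> (c \<otimes> c)) \<otimes> t [^] (0::nat)"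
proof -
  have t_k: "t [^] k = c \<otimes> w"
    unfolding w_def using c_carrier inv_c_carrier t_carrier c_Units by (simp add: m_assoc[symmetric])
  have "t [^] (2 * k) = c \<otimes> (w \<otimes> c) \<otimes> w"
    using t_k c_carrier w_carrier t_carrier by (simp add: nat_pow_mult[symmetric] mult_2 m_assoc)
  also have "\<dots> = (c \<otimes> c) \<otimes> (w \<otimes> w)" using w_commute[OF c_D] c_carrier w_carrier by (simp add: m_assoc)
  also have "\<dots> = (c \<otimes> c \<otimes> z) \<otimes> w \<oplus> \<ominus> (c \<otimes> c)"
    unfolding w_sq using c_carrier w_carrier z_carrier by (simp add: a_minus_def r_distr m_assoc r_minus)
  finally show ?thesis unfolding w_def using c_carrier inv_c_carrier z_carrier t_carrier by (simp add: m_assoc)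
qed

lemma inv_t_eq: "inv t = (z \<otimes> inv c) \<otimes> t [^] (k - 1) \<oplus> (\<ominus> (inv c \<otimes> inv c)) \<otimes> t [^] (2 * k - 1)"
proof -
  interpret inv: skew_laurent K D sigma_inv "inv t" by (rule skew_laurent_inv)
  have "z \<ominus> w = w'"
    unfolding z_def a_minus_def using w_carrier w'_carrier by (metis a_assoc a_comm add.inv_closed r_neg r_zero)
  then have "inv t [^] k = (z \<ominus> w) \<otimes> inv c"
    unfolding w'_def using inv_t_carrier c_carrier inv_c_carrier c_Units by (simp add: m_assoc)
  moreover have "inv t = inv t [^] k \<otimes> t [^] (k - 1)"
    using inv.t_pow_mult_inv_t_pow[of k "k - 1"] k_pos inv_inv_t inv_t_carrier by simp
  moreover have "w \<otimes> inv c \<otimes> t [^] (k - 1) = (inv c \<otimes> inv c) \<otimes> t [^] (2 * k - 1)"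
  proof -
    have "w \<otimes> inv c \<otimes> t [^] (k - 1) = (inv c \<otimes> inv c) \<otimes> (t [^] k \<otimes> t [^] (k - 1))"
      unfolding w_commute[OF inv_c_D] unfolding w_def using inv_c_carrier t_carrier by (simp add: m_assoc)
    moreover have "k + (k - 1) = 2 * k - 1" using k_pos by simp
    ultimately show ?thesis using t_carrier by (simp add: nat_pow_mult)
  qed
  ultimately show ?thesis
    using z_carrier w_carrier inv_c_carrier t_carrier by (simp add: a_minus_def l_distr l_minus)
qed

definition Dz :: "'a set" where "Dz = generate_ring K (D \<union> {z})"

definition low_t_pows :: "'a set" where "low_t_pows = (\<lambda>j::nat. t [^] j) ` {..<2 * k}"

lemma subring_Dz: "subring Dz K"
  unfolding Dz_def by (intro generate_ring_is_subring) (use D_carrier z_carrier in auto)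

lemma D_subset_Dz: "D \<subseteq> Dz" and z_Dz: "z \<in> Dz"
  unfolding Dz_def by (auto intro: generate_ring.incl)

lemma z_laurent: "z \<in> laurent"
  unfolding z_def w_def w'_def
  by (intro subringE(6,7)[OF subring_laurent] t_pow_laurent inv_t_pow_laurent)
    (use D_subset_laurent c_D inv_c_D in auto)

lemma Dz_subset_laurent: "Dz \<subseteq> laurent"
  unfolding Dz_def
  by (intro generate_ring_min_subring1[OF _ subring_laurent]) (use D_carrier z_carrier D_subset_laurent z_laurent in auto)

lemma low_t_pows_finite: "finite low_t_pows" and low_t_pows_carrier: "low_t_pows \<subseteq> carrier K"
  unfolding low_t_pows_def using t_carrier by auto

lemma low_t_pows_laurent: "low_t_pows \<subseteq> laurent"
  unfolding low_t_pows_def using t_pow_laurent by auto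

lemmas low_span_single = left_span_single[OF subring_Dz low_t_pows_finite low_t_pows_carrier]
lemmas low_span_add = left_span_add[OF subring_Dz low_t_pows_finite low_t_pows_carrier]
lemmas low_span_lmult = left_span_lmult[OF subring_Dz low_t_pows_finite low_t_pows_carrier]

lemma low_span_monom: "b \<in> Dz \<Longrightarrow> j < 2 * k \<Longrightarrow> b \<otimes> t [^] j \<in> left_span K Dz low_t_pows"
  by (rule low_span_single) (auto simp: low_t_pows_def)

lemma c_Dz: "c \<in> Dz" and inv_c_Dz: "inv c \<in> Dz"
  using c_D inv_c_D D_subset_Dz by auto

lemma t_pow_2k_low_span: "t [^] (2 * k) \<in> left_span K Dz low_t_pows"
  unfolding t_pow_2k using k_pos z_Dz c_Dz inv_c_Dz
  by (intro low_span_add low_span_monom) (auto intro!: subringE(5,6)[OF subring_Dz])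

lemma inv_t_low_span: "inv t \<in> left_span K Dz low_t_pows"
  by (subst inv_t_eq, intro low_span_add low_span_monom)
    (use k_pos z_Dz inv_c_Dz in \<open>auto intro!: subringE(5,6)[OF subring_Dz]\<close>)

lemma low_span_mult_generator:
  assumes b: "b \<in> Dz" and j: "j < 2 * k" and h: "h \<in> D \<union> {t, inv t}"
  shows "b \<otimes> t [^] (j::nat) \<otimes> h \<in> left_span K Dz low_t_pows"
proof -
  have bC: "b \<in> carrier K" using b subringE(1)[OF subring_Dz] by auto
  consider "h \<in> D" | "h = t" | "h = inv t" using h by auto
  then show ?thesis
  proof cases
    case 1
    then have "b \<otimes> t [^] j \<otimes> h = (b \<otimes> (\<sigma> ^^ j) h) \<otimes> t [^] j"
      using t_pow_commute bC t_carrier D_carrier sigma_pow_D by (simp add: m_assoc)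
    moreover have "b \<otimes> (\<sigma> ^^ j) h \<in> Dz"
      using 1 b D_subset_Dz sigma_pow_D subringE(6)[OF subring_Dz] by blast
    ultimately show ?thesis using low_span_monom j by simp
  next
    case 2
    then have eq: "b \<otimes> t [^] j \<otimes> h = b \<otimes> t [^] Suc j" using bC t_carrier by (simp add: m_assoc)
    show ?thesis
    proof (cases "Suc j < 2 * k")
      case True then show ?thesis using eq low_span_monom[OF b True] by simp
    next
      case False
      then have "Suc j = 2 * k" using j by simp
      then show ?thesis using eq low_span_lmult[OF b t_pow_2k_low_span] by simp
    qed
  next
    case 3
    show ?thesis
    proof (cases j)
      case 0 then show ?thesis using 3 low_span_lmult[OF b inv_t_low_span] bC by simp
    next
      case (Suc j')
      then have "b \<otimes> t [^] j \<otimes> h = b \<otimes> t [^] j' \<otimes> (t \<otimes> inv t)"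
        using 3 bC t_carrier inv_t_carrier by (simp add: m_assoc)
      then show ?thesis using t_inv_t bC t_carrier low_span_monom[OF b, of j'] Suc j by simp
    qed
  qed
qed

lemma laurent_fin_gen_over_Dz: "fin_gen_left_module K Dz laurent"
  unfolding laurent_def
proof (rule fin_gen_left_module_generate_ringI[OF subring_Dz low_t_pows_finite low_t_pows_carrier
      laurent_generators_carrier])
  show "Dz \<subseteq> generate_ring K (D \<union> {t, inv t})" using Dz_subset_laurent unfolding laurent_def .
  show "low_t_pows \<subseteq> generate_ring K (D \<union> {t, inv t})" using low_t_pows_laurent unfolding laurent_def .
  show "\<one> \<in> left_span K Dz low_t_pows"
    using low_span_monom[of \<one> 0] k_pos subringE(3)[OF subring_Dz] by simp
  show "b \<otimes> g \<otimes> h \<in> left_span K Dz low_t_pows" if "h \<in> D \<union> {t, inv t}" "b \<in> Dz" "g \<in> low_t_pows" for h b g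
    using that low_span_mult_generator unfolding low_t_pows_def by auto
qed

lemma aut_normalizable_laurent: "automorphically_normalizable K D laurent"
  unfolding automorphically_normalizable_def
proof (intro exI[of _ 1] exI[of _ "\<lambda>_. z"] exI[of _ "\<lambda>_. id"] conjI)
  show "\<forall>i<(1::nat). id \<in> ring_aut K D \<and> automorphic K D id z"
    unfolding ring_aut_def ring_iso_def ring_hom_def automorphic_def
    using z_commute by (auto simp: bij_betw_def)
  have "(\<lambda>_. z) ` {..<(1::nat)} = {z}" by auto
  then have "generate_ring K (D \<union> (\<lambda>_. z) ` {..<(1::nat)}) = Dz" unfolding Dz_def by simp
  then show "fin_gen_left_module K (generate_ring K (D \<union> (\<lambda>_. z) ` {..<(1::nat)})) laurent"
    using laurent_fin_gen_over_Dz by simp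
qed (use z_laurent z_alg_indep in auto)

end

lemma (in skew_laurent) finite_inner_order_imp_skew_laurent_inner:
  assumes "finite_inner_order K D \<sigma>"
  obtains k c where "skew_laurent_inner K D \<sigma> t k c"
  using assms
proof (rule finite_inner_orderE)
  fix k c
  assume "0 < k" "c \<in> D" "c \<noteq> \<zero>" "\<And>r. r \<in> D \<Longrightarrow> (\<sigma> ^^ k) r = c \<otimes> r \<otimes> inv c"
  then have "skew_laurent_inner K D \<sigma> t k c" by unfold_locales
  then show thesis by (rule that)
qed

text \<open>Only the relations of t inside the division ring K are needed below.\<close>
lemma skew_fraction_field_imp_skew_laurent:
  assumes "skew_fraction_field K D \<sigma> t"
  shows "skew_laurent K D \<sigma> t"
proof -
  have "division_ring K" "subdivring D K" using assms unfolding skew_fraction_field_def by auto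
  then show ?thesis
    using assms unfolding skew_fraction_field_def division_ring_def subdivring_def
    by (intro skew_laurent.intro skew_laurent_axioms.intro) auto
qed

theorem lemma5p6:
  fixes K :: "('a, 'b) ring_scheme" and D :: "'a set" and \<sigma> :: "'a \<Rightarrow> 'a" and t :: 'a
  assumes "skew_fraction_field K D \<sigma> t"
  shows "automorphically_normalizable K D (generate_ring K (D \<union> {t, inv\<^bsub>K\<^esub> t}))
           \<longleftrightarrow> finite_inner_order K D \<sigma>"
proof -
  interpret skew_laurent K D \<sigma> t
    using assms by (rule skew_fraction_field_imp_skew_laurent)
  have S: "generate_ring K (D \<union> {t, inv\<^bsub>K\<^esub> t}) = laurent" unfolding laurent_def ..
  show ?thesis
  proof
    assume "automorphically_normalizable K D (generate_ring K (D \<union> {t, inv\<^bsub>K\<^esub> t}))"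
    then show "finite_inner_order K D \<sigma>"
      unfolding S by (rule aut_normalizable_laurent_imp_finite_inner_order)
  next
    assume "finite_inner_order K D \<sigma>"
    then obtain k c where "skew_laurent_inner K D \<sigma> t k c"
      by (rule finite_inner_order_imp_skew_laurent_inner)
    then interpret skew_laurent_inner K D \<sigma> t k c .
    show "automorphically_normalizable K D (generate_ring K (D \<union> {t, inv\<^bsub>K\<^esub> t}))"
      unfolding S by (rule aut_normalizable_laurent)
  qed
qed

end
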